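(* Let $\sigma=\mathrm{ReLU}$, i.e. $\sigma(x)=\max(0,x)$, and consider the covariance sequence $\{\Sigma^{(L)}\}_{L\ge1}$ and the metrics $\mathrm{FSP}_L(\sigma_w^2)$, $\mathrm{GEV}_L(\sigma_w^2)$ defined in the context. Then: 1. If $\sigma_w^2=2$, then either $\lim_{L\to\infty}\mathrm{GEV}_L(\sigma_w^2)=0$ or $\lim_{L\to\infty}\mathrm{FSP}_L(\sigma_w^2)=0$. 2. If $0<\sigma_w^2<2$, then for every $L\ge1$, $\mathrm{FSP}_L(\sigma_w^2)\le \frac{2C}{d_0}\left(\frac{\sigma_w^2}{2}\right)^L$.
   Context: Let $\mathcal G=(\mathcal V,\mathcal E)$ be a finite undirected graph with $n$ nodes, adjacency matrix $A\in\{0,1\}^{n\times n}$, degree matrix $D=\mathrm{diag}(A\mathbf 1_n)$ with degrees $d_i$, $\tilde A=A+I$, $\tilde D=D+I$, normalized adjacency $\hat A=\tilde D^{-1/2}\tilde A\tilde D^{-1/2}$ and normalized Laplacian $\hat L=I-\hat A$. For $H\in\mathbb R^{n\times C}$ with rows $h_i$, the Dirichlet energy is $\mathrm{Dir}(H)=\mathrm{tr}(H^\top\hat LH)=\sum_{\{i,j\}\in\mathcal E}\|h_i/\sqrt{1+d_i}-h_j/\sqrt{1+d_j}\|^2$. Let $X\in\mathbb R^{n\times d_0}$ be a nonzero feature matrix, $C\ge1$ an integer (number of output channels), $\sigma:\mathbb R\to\mathbb R$ an activation function applied entrywise, and $\sigma_w^2>0$. For a positive semidefinite $\Sigma\in\mathbb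 R^{n\times n}$ set $G(\Sigma)=\mathbb E_{h\sim N(\mathbf 0_n,\Sigma)}[\sigma(h)\sigma(h)^\top]$. Define $\Sigma^{(1)}=\frac{\sigma_w^2}{d_0}\hat AXX^\top\hat A$ and $\Sigma^{(l+1)}=\sigma_w^2\hat AG(\Sigma^{(l)})\hat A$ for $l\ge1$ (the infinite-width NNGP covariances of a vanilla GCN $H^{(l)}=\hat A\sigma(H^{(l-1)})W^{(l)}$ with i.i.d. weights of variance $\sigma_w^2/\text{fan-in}$ and zero biases). With $H\in\mathbb R^{n\times C}$ having i.i.d. columns distributed as $N(\mathbf 0_n,\Sigma^{(L)})$, define the forward signal propagation metric $\mathrm{FSP}_L(\sigma_w^2)=\mathbb E[\|H\|_F^2/\|X\|_F^2]$ and the graph embedding variation metric $\mathrm{GEV}_L(\sigma_w^2)=\mathbb E[\mathrm{Dir}(H)/\|H\|_F^2]$. *)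

theory Defs
  imports "HOL-Probability.Probability"
begin

(* Graph on the finite node type 'n, given by a symmetric irreflexive edge relation E. *)

definition adj_mat :: "('n::finite \<Rightarrow> 'n \<Rightarrow> bool) \<Rightarrow> real^'n^'n" where
  "adj_mat E = (\<chi> i j. if E i j then 1 else 0)"

definition degree :: "('n::finite \<Rightarrow> 'n \<Rightarrow> bool) \<Rightarrow> 'n \<Rightarrow> real" where
  "degree E i = (\<Sum>j\<in>UNIV. adj_mat E $ i $ j)"

definition Dtil_inv_sqrt :: "('n::finite \<Rightarrow> 'n \<Rightarrow> bool) \<Rightarrow> real^'n^'n" where
  "Dtil_inv_sqrt E = (\<chi> i j. if i = j then 1 / sqrt (1 + degree E i) else 0)"

definition norm_adj :: "('n::finite \<Rightarrow> 'n \<Rightarrow> bool) \<Rightarrow> real^'n^'n" where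
  "norm_adj E = Dtil_inv_sqrt E ** (adj_mat E + mat 1) ** Dtil_inv_sqrt E"

definition norm_lap :: "('n::finite \<Rightarrow> 'n \<Rightarrow> bool) \<Rightarrow> real^'n^'n" where
  "norm_lap E = mat 1 - norm_adj E"

definition relu :: "real \<Rightarrow> real" where
  "relu x = max 0 x"

definition std_normal :: "real measure" where
  "std_normal = density lborel std_normal_density"

(* a square root factor B with B B^T = S (exists for PSD S) *)
definition cov_factor :: "real^'n^'n \<Rightarrow> real^'n^'n" where
  "cov_factor S = (SOME B. B ** transpose B = S)"

(* G(S) = E_{h ~ N(0,S)} [\<sigma>(h) \<sigma>(h)^T], with h = B z, z standard Gaussian on R^n, B B^T = S *)
definition gauss_G :: "(real \<Rightarrow> real) \<Rightarrow> real^'n::finite^'n \<Rightarrow> real^'n^'n" where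
  "gauss_G \<sigma> S = (\<chi> i j. \<integral>z. \<sigma> ((cov_factor S *v (\<chi> k. z k)) $ i) * \<sigma> ((cov_factor S *v (\<chi> k. z k)) $ j)
        \<partial>(PiM (UNIV :: 'n set) (\<lambda>_. std_normal)))"

(* NNGP covariances: nngp_cov ... L = \<Sigma>^(L) for L \<ge> 1 (index 0 unused, set to 0).
   s stands for \<sigma>_w^2, X is the n \<times> d_0 feature matrix with d_0 = CARD('d). *)
fun nngp_cov :: "(real \<Rightarrow> real) \<Rightarrow> ('n::finite \<Rightarrow> 'n \<Rightarrow> bool) \<Rightarrow> real^'d::finite^'n \<Rightarrow> real \<Rightarrow> nat \<Rightarrow> real^'n^'n" where
  "nngp_cov \<sigma> E X s 0 = 0"
| "nngp_cov \<sigma> E X s (Suc 0) =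
     (s / real CARD('d)) *\<^sub>R (norm_adj E ** X ** transpose X ** norm_adj E)"
| "nngp_cov \<sigma> E X s (Suc (Suc l)) =
     s *\<^sub>R (norm_adj E ** gauss_G \<sigma> (nngp_cov \<sigma> E X s (Suc l)) ** norm_adj E)"

(* Random embedding H \<in> R^{n \<times> C} with i.i.d. columns N(0,S):  H = B Z with Z an n \<times> C matrix of
   i.i.d. N(0,1) entries (columns indexed by {..<C}). *)
definition std_gauss_mat :: "nat \<Rightarrow> ('n::finite \<times> nat \<Rightarrow> real) measure" where
  "std_gauss_mat C = PiM (UNIV \<times> {..<C}) (\<lambda>_. std_normal)"

definition gauss_emb :: "real^'n::finite^'n \<Rightarrow> ('n \<times> nat \<Rightarrow> real) \<Rightarrow> 'n \<Rightarrow> nat \<Rightarrow> real" where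
  "gauss_emb S Z i c = (\<Sum>k\<in>UNIV. cov_factor S $ i $ k * Z (k, c))"

definition frob_sq_emb :: "nat \<Rightarrow> ('n::finite \<Rightarrow> nat \<Rightarrow> real) \<Rightarrow> real" where
  "frob_sq_emb C H = (\<Sum>i\<in>UNIV. \<Sum>c<C. (H i c)\<^sup>2)"

definition frob_sq :: "real^'d::finite^'n::finite \<Rightarrow> real" where
  "frob_sq X = (\<Sum>i\<in>UNIV. \<Sum>j\<in>UNIV. (X $ i $ j)\<^sup>2)"

definition dirichlet :: "('n::finite \<Rightarrow> 'n \<Rightarrow> bool) \<Rightarrow> nat \<Rightarrow> ('n \<Rightarrow> nat \<Rightarrow> real) \<Rightarrow> real" where
  "dirichlet E C H = (\<Sum>c<C. \<Sum>i\<in>UNIV. \<Sum>j\<in>UNIV. H i c * norm_lap E $ i $ j * H j c)"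

definition FSP :: "(real \<Rightarrow> real) \<Rightarrow> ('n::finite \<Rightarrow> 'n \<Rightarrow> bool) \<Rightarrow> real^'d::finite^'n \<Rightarrow> nat \<Rightarrow> nat \<Rightarrow> real \<Rightarrow> real" where
  "FSP \<sigma> E X C L s = (\<integral>Z. frob_sq_emb C (gauss_emb (nngp_cov \<sigma> E X s L) Z) / frob_sq X \<partial>std_gauss_mat C)"

definition GEV :: "(real \<Rightarrow> real) \<Rightarrow> ('n::finite \<Rightarrow> 'n \<Rightarrow> bool) \<Rightarrow> real^'d::finite^'n \<Rightarrow> nat \<Rightarrow> nat \<Rightarrow> real \<Rightarrow> real" where
  "GEV \<sigma> E X C L s = (\<integral>Z. dirichlet E C (gauss_emb (nngp_cov \<sigma> E X s L) Z)
        / frob_sq_emb C (gauss_emb (nngp_cov \<sigma> E X s L) Z) \<partial>std_gauss_mat C)"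

end

(*
  For ReLU, E[relu(h)^2] = E[h^2]/2, so the Gaussian map G halves the trace of a covariance,
  while the normalized adjacency A is a contraction that loses a fixed multiple of the Dirichlet
  energy: |A x|^2 <= |x|^2 - c x^T L x with c = min_i 1/(1 + d_i).  Since FSP_L is
  C tr(Sigma_L) / |X|_F^2, this gives tr(Sigma_(L+1)) <= (s/2) tr(Sigma_L) and the geometric bound
  for s < 2.  At s = 2 the traces still decrease, and their decrements dominate the Dirichlet
  energies tr(L Sigma_L), which are therefore summable and tend to 0.  If the traces tend to 0,
  so does FSP.  Otherwise they stay above a positive limit T; then some coordinate of H is a
  Gaussian linear form with a coefficient of size at least sqrt T / n, so |H|_F^2 is small only
  with small probability, and GEV, whose integrand never exceeds 2, tends to 0.
*)
theory Submission
  imports Defs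
begin

section \<open>Standard Gaussian vectors\<close>

lemma sets_std_normal [simp, measurable_cong]: "sets std_normal = sets borel"
  by (simp add: std_normal_def)

lemma space_std_normal [simp]: "space std_normal = UNIV"
  by (simp add: std_normal_def)

lemma prob_space_std_normal: "prob_space std_normal"
  unfolding std_normal_def by (rule prob_space_normal_density) simp

interpretation std_normal: prob_space std_normal
  by (rule prob_space_std_normal)

lemma product_sigma_finite_std_normal: "product_sigma_finite (\<lambda>_::'i. std_normal)"
  using product_prob_spaceI[OF prob_space_std_normal]
  unfolding product_prob_space_def by blast

lemma
  shows integrable_std_normal_power: "integrable std_normal (\<lambda>x. x ^ k)"
    and integral_std_normal_power:
      "integral\<^sup>L std_normal (\<lambda>x. x ^ k) = integral\<^sup>L lborel (\<lambda>x. std_normal_density x * x ^ k)"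
  unfolding std_normal_def by (simp_all add: integrable_density integral_density integrable_std_normal_moment)

lemma integral_std_normal_id: "integral\<^sup>L std_normal (\<lambda>x. x) = 0"
  using integral_std_normal_power[of 1] integral_std_normal_moment_odd[of 0] by simp

lemma integral_std_normal_square: "integral\<^sup>L std_normal (\<lambda>x. x * x) = 1"
  using integral_std_normal_power[of 2] integral_std_normal_moment_even[of 1]
  by (simp add: power2_eq_square)

lemma integrable_std_normal_square: "integrable std_normal (\<lambda>x. x * x)"
  using integrable_std_normal_power[of 2] by (simp add: power2_eq_square)

lemma distr_std_normal_uminus: "distr std_normal std_normal uminus = std_normal"
proof (rule measure_eqI)
  fix A assume "A \<in> sets (distr std_normal std_normal uminus)"
  then have A: "A \<in> sets borel" by simp
  then have A': "uminus -` A \<in> sets borel"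
    using measurable_sets[OF borel_measurable_uminus[OF measurable_ident_sets[OF refl]] A] by simp
  have "emeasure (distr std_normal std_normal uminus) A
      = (\<integral>\<^sup>+ x. ennreal (std_normal_density x) * indicator (uminus -` A) x \<partial>lborel)"
    unfolding std_normal_def using A A' by (subst emeasure_distr) (auto simp: emeasure_density)
  also have "\<dots> = (\<integral>\<^sup>+ x. (\<lambda>y. ennreal (std_normal_density y) * indicator A y) (- x) \<partial>lborel)"
    by (intro nn_integral_cong) (auto simp: normal_density_def split: split_indicator)
  also have "\<dots> = (\<integral>\<^sup>+ y. ennreal (std_normal_density y) * indicator A y \<partial>distr lborel borel uminus)"
    using A by (subst nn_integral_distr) auto
  also have "\<dots> = emeasure std_normal A"
    unfolding lborel_distr_uminus std_normal_def using A by (subst emeasure_density) auto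
  finally show "emeasure (distr std_normal std_normal uminus) A = emeasure std_normal A" .
qed simp

abbreviation std_gauss :: "'i set \<Rightarrow> ('i \<Rightarrow> real) measure" where
  "std_gauss I \<equiv> PiM I (\<lambda>_. std_normal)"

lemma prob_space_std_gauss: "prob_space (std_gauss I)"
  by (rule prob_space_PiM) (rule prob_space_std_normal)

text \<open>Outside the index set the coordinate is constant on the space; this lets the
  \<open>measurable\<close> method handle \<open>Z (k, c)\<close> without knowing \<open>c < C\<close>.\<close>

lemma std_gauss_coord_measurable [measurable]: "(\<lambda>z. z j) \<in> borel_measurable (std_gauss I)"
proof (cases "j \<in> I")
  case True
  then show ?thesis by measurable
next
  case False
  have "(\<lambda>z. z j) \<in> borel_measurable (std_gauss I) \<longleftrightarrow> (\<lambda>z. undefined::real) \<in> borel_measurable (std_gauss I)"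
    by (rule measurable_cong) (use False in \<open>auto simp: space_PiM PiE_def extensional_def\<close>)
  then show ?thesis by simp
qed

lemma
  assumes I: "finite I" and a: "a \<in> I" and b: "b \<in> I"
  shows integrable_std_gauss_coord_mult: "integrable (std_gauss I) (\<lambda>z. z a * z b)"
    and integral_std_gauss_coord_mult:
      "integral\<^sup>L (std_gauss I) (\<lambda>z. z a * z b) = (if a = b then 1 else 0)"
proof -
  define f where "f i x = (if i = a then x else 1) * (if i = b then x else (1::real))" for i x
  have eq: "z a * z b = (\<Prod>i\<in>I. f i (z i))" for z
    using I a b by (simp add: f_def prod.distrib prod.delta)
  have intf: "integrable std_normal (f i)" for i
    unfolding f_def
    using integrable_std_normal_power[of 1] integrable_std_normal_square
    by (cases "i = a"; cases "i = b") simp_all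
  show "integrable (std_gauss I) (\<lambda>z. z a * z b)"
    unfolding eq by (rule product_sigma_finite.product_integrable_prod[OF product_sigma_finite_std_normal I intf])
  have "integral\<^sup>L (std_gauss I) (\<lambda>z. z a * z b) = (\<Prod>i\<in>I. integral\<^sup>L std_normal (f i))"
    unfolding eq by (rule product_sigma_finite.product_integral_prod[OF product_sigma_finite_std_normal I intf])
  also have "\<dots> = (if a = b then 1 else 0)"
  proof (cases "a = b")
    case True
    then have "integral\<^sup>L std_normal (f i) = 1" for i
      unfolding f_def using std_normal.prob_space
      by (cases "i = a") (simp_all add: integral_std_normal_square)
    then show ?thesis using True by simp
  next
    case False
    then have "f a = (\<lambda>x. x)"
      by (auto simp: f_def)
    then have "integral\<^sup>L std_normal (f a) = 0"
      by (simp add: integral_std_normal_id)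
    then show ?thesis using False I a by (auto intro!: prod_zero)
  qed
  finally show "integral\<^sup>L (std_gauss I) (\<lambda>z. z a * z b) = (if a = b then 1 else 0)" .
qed

lemma
  assumes I: "finite I" and K: "finite K" and g: "inj_on g K" "g ` K \<subseteq> I"
  shows integrable_std_gauss_linear_mult:
      "integrable (std_gauss I) (\<lambda>z. (\<Sum>k\<in>K. u k * z (g k)) * (\<Sum>k\<in>K. v k * z (g k)))"
    and integral_std_gauss_linear_mult:
      "integral\<^sup>L (std_gauss I) (\<lambda>z. (\<Sum>k\<in>K. u k * z (g k)) * (\<Sum>k\<in>K. v k * z (g k)))
        = (\<Sum>k\<in>K. u k * v k)"
proof -
  have eq: "(\<Sum>k\<in>K. u k * z (g k)) * (\<Sum>k\<in>K. v k * z (g k)) =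
     (\<Sum>k\<in>K. \<Sum>k'\<in>K. (u k * v k') * (z (g k) * z (g k')))" for z
    by (simp add: sum_product algebra_simps)
  have int: "integrable (std_gauss I) (\<lambda>z. z (g k) * z (g k'))" if "k \<in> K" "k' \<in> K" for k k'
    using integrable_std_gauss_coord_mult[OF I] g that by auto
  show "integrable (std_gauss I) (\<lambda>z. (\<Sum>k\<in>K. u k * z (g k)) * (\<Sum>k\<in>K. v k * z (g k)))"
    unfolding eq by (auto intro!: integrable_sum integrable_mult_right int)
  have "integral\<^sup>L (std_gauss I) (\<lambda>z. (\<Sum>k\<in>K. u k * z (g k)) * (\<Sum>k\<in>K. v k * z (g k)))
      = (\<Sum>k\<in>K. \<Sum>k'\<in>K. (u k * v k') * integral\<^sup>L (std_gauss I) (\<lambda>z. z (g k) * z (g k')))"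
    unfolding eq using int by (simp add: integral_sum integrable_sum)
  also have "\<dots> = (\<Sum>k\<in>K. \<Sum>k'\<in>K. if k' = k then u k * v k' else 0)"
  proof (intro sum.cong refl)
    fix k k' assume kk: "k \<in> K" "k' \<in> K"
    then have "(g k = g k') = (k' = k)" "g k \<in> I" "g k' \<in> I"
      using g by (auto dest: inj_onD)
    then show "u k * v k' * integral\<^sup>L (std_gauss I) (\<lambda>z. z (g k) * z (g k'))
        = (if k' = k then u k * v k' else 0)"
      using integral_std_gauss_coord_mult[OF I, of "g k" "g k'"] by simp
  qed
  also have "\<dots> = (\<Sum>k\<in>K. u k * v k)"
    using K by simp
  finally show "integral\<^sup>L (std_gauss I) (\<lambda>z. (\<Sum>k\<in>K. u k * z (g k)) * (\<Sum>k\<in>K. v k * z (g k)))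
      = (\<Sum>k\<in>K. u k * v k)" .
qed

lemma distr_std_gauss_uminus:
  assumes "finite I"
  shows "distr (std_gauss I) (std_gauss I) (compose I uminus) = std_gauss I"
  using distr_PiM_finite_prob_space'[OF assms, of "\<lambda>_. std_normal" "\<lambda>_. std_normal" uminus]
  by (simp add: prob_space_std_normal distr_std_normal_uminus)

lemma relu_measurable [measurable]: "relu \<in> borel_measurable borel"
  unfolding relu_def[abs_def] by measurable

lemma relu_square_le: "relu x * relu x \<le> x * x" "relu (- x) * relu (- x) \<le> x * x"
  by (auto simp: relu_def max_def)

lemma abs_relu_le: "\<bar>relu x\<bar> \<le> \<bar>x\<bar>"
  by (simp add: relu_def max_def)

text \<open>The reflection \<open>z \<mapsto> -z\<close> preserves the law and swaps \<open>relu h\<close> with \<open>relu (-h)\<close>,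
  whose squares add up to \<open>h\<^sup>2\<close>.\<close>

lemma integral_std_gauss_relu_linear_sq:
  assumes I: "finite I"
  shows "integral\<^sup>L (std_gauss I) (\<lambda>z. (relu (\<Sum>i\<in>I. w i * z i))\<^sup>2) = (\<Sum>i\<in>I. (w i)\<^sup>2) / 2"
proof -
  define h where "h z = (\<Sum>i\<in>I. w i * z i)" for z :: "'a \<Rightarrow> real"
  have [measurable]: "h \<in> borel_measurable (std_gauss I)"
    unfolding h_def by measurable
  have hh: "integrable (std_gauss I) (\<lambda>z. h z * h z)"
      "integral\<^sup>L (std_gauss I) (\<lambda>z. h z * h z) = (\<Sum>i\<in>I. (w i)\<^sup>2)"
    using integrable_std_gauss_linear_mult[OF I I, of id w w]
      integral_std_gauss_linear_mult[OF I I, of id w w]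
    by (simp_all add: h_def power2_eq_square)
  have int_pos: "integrable (std_gauss I) (\<lambda>z. (relu (h z))\<^sup>2)"
    and int_neg: "integrable (std_gauss I) (\<lambda>z. (relu (- h z))\<^sup>2)"
    by (rule Bochner_Integration.integrable_bound[OF hh(1)];
        auto simp: power2_eq_square abs_mult relu_square_le)+
  have reflect [measurable]: "compose I uminus \<in> std_gauss I \<rightarrow>\<^sub>M std_gauss I"
    unfolding compose_def by (rule measurable_restrict) measurable
  have h_reflect: "h (compose I uminus z) = - h z" for z
    unfolding h_def compose_def by (simp add: sum_negf)
  have "integral\<^sup>L (std_gauss I) (\<lambda>z. (relu (h z))\<^sup>2)
      = integral\<^sup>L (distr (std_gauss I) (std_gauss I) (compose I uminus)) (\<lambda>z. (relu (h z))\<^sup>2)"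
    by (simp add: distr_std_gauss_uminus[OF I])
  also have "\<dots> = integral\<^sup>L (std_gauss I) (\<lambda>z. (relu (- h z))\<^sup>2)"
    by (subst integral_distr) (auto simp: h_reflect)
  finally have sym: "integral\<^sup>L (std_gauss I) (\<lambda>z. (relu (h z))\<^sup>2)
      = integral\<^sup>L (std_gauss I) (\<lambda>z. (relu (- h z))\<^sup>2)" .
  have "(\<lambda>z. h z * h z) = (\<lambda>z. (relu (h z))\<^sup>2 + (relu (- h z))\<^sup>2)"
    by (rule ext) (simp add: relu_def max_def power2_eq_square)
  then have "integral\<^sup>L (std_gauss I) (\<lambda>z. h z * h z) = 2 * integral\<^sup>L (std_gauss I) (\<lambda>z. (relu (h z))\<^sup>2)"
    using int_pos int_neg sym by simp
  then show ?thesis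
    using hh(2) by (simp add: h_def)
qed

lemma std_normal_density_le_1: "std_normal_density x \<le> 1"
proof -
  have "1 / sqrt (2 * pi) \<le> 1"
    using pi_gt3 by simp
  moreover have "exp (- x\<^sup>2 / 2) \<le> 1"
    by simp
  ultimately show ?thesis
    unfolding std_normal_density_def
    by (intro mult_le_one) auto
qed

lemma emeasure_std_normal_strip_le:
  assumes b: "b \<noteq> 0" and e: "0 < e"
  shows "emeasure std_normal {y. \<bar>b * y + c\<bar> < e} \<le> ennreal (2 * e / \<bar>b\<bar>)"
proof -
  define m where "m = - c / b"
  have [measurable]: "{y. \<bar>b * y + c\<bar> < e} \<in> sets borel"
    by measurable
  have strip: "{y. \<bar>b * y + c\<bar> < e} \<subseteq> {m - e / \<bar>b\<bar> .. m + e / \<bar>b\<bar>}"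
  proof
    fix y assume "y \<in> {y. \<bar>b * y + c\<bar> < e}"
    moreover have "b * y + c = b * (y - m)"
      using b by (simp add: m_def field_simps)
    ultimately have "\<bar>b\<bar> * \<bar>y - m\<bar> < e"
      by (simp add: abs_mult)
    then have "\<bar>y - m\<bar> < e / \<bar>b\<bar>"
      using b by (simp add: field_simps mult.commute)
    then show "y \<in> {m - e / \<bar>b\<bar> .. m + e / \<bar>b\<bar>}"
      by auto
  qed
  have "emeasure std_normal {y. \<bar>b * y + c\<bar> < e}
      = (\<integral>\<^sup>+ y. ennreal (std_normal_density y) * indicator {y. \<bar>b * y + c\<bar> < e} y \<partial>lborel)"
    unfolding std_normal_def by (subst emeasure_density) auto
  also have "\<dots> \<le> (\<integral>\<^sup>+ y. indicator {m - e / \<bar>b\<bar> .. m + e / \<bar>b\<bar>} y \<partial>lborel)"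
    using strip std_normal_density_le_1
    by (intro nn_integral_mono) (auto split: split_indicator)
  also have "\<dots> = ennreal (2 * e / \<bar>b\<bar>)"
    using e b by simp
  finally show ?thesis .
qed

text \<open>Integrate out the coordinate \<open>a\<close> first; the standard normal density is at most 1.\<close>

lemma measure_std_gauss_linear_small_le:
  assumes I: "finite I" and a: "a \<in> I" and wa: "w a \<noteq> 0" and e: "0 < e"
  shows "measure (std_gauss I) {z \<in> space (std_gauss I). \<bar>\<Sum>i\<in>I. w i * z i\<bar> < e} \<le> 2 * e / \<bar>w a\<bar>"
proof -
  interpret P: prob_space "std_gauss I"
    by (rule prob_space_std_gauss)
  define J where "J = I - {a}"
  have IJ: "I = insert a J" "a \<notin> J" "finite J"
    using a I by (auto simp: J_def)
  define A where "A = {z \<in> space (std_gauss I). \<bar>\<Sum>i\<in>I. w i * z i\<bar> < e}"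
  have A_sets [measurable]: "A \<in> sets (std_gauss I)"
    unfolding A_def using I by measurable
  have "emeasure (std_gauss I) A = (\<integral>\<^sup>+ z. indicator A z \<partial>std_gauss I)"
    using A_sets by simp
  also have "\<dots> = (\<integral>\<^sup>+ x. (\<integral>\<^sup>+ y. indicator A (x(a := y)) \<partial>std_normal) \<partial>std_gauss J)"
    unfolding IJ(1) using IJ A_sets[unfolded IJ(1)]
    by (subst product_sigma_finite.product_nn_integral_insert[OF product_sigma_finite_std_normal]) auto
  also have "\<dots> \<le> (\<integral>\<^sup>+ x. ennreal (2 * e / \<bar>w a\<bar>) \<partial>std_gauss J)"
  proof (rule nn_integral_mono)
    fix x assume x: "x \<in> space (std_gauss J)"
    define c where "c = (\<Sum>i\<in>J. w i * x i)"
    have "indicator A (x(a := y)) = (indicator {y. \<bar>w a * y + c\<bar> < e} y :: ennreal)" for y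
    proof -
      have "x(a := y) \<in> space (std_gauss I)"
        using x IJ by (auto simp: space_PiM intro!: PiE_fun_upd)
      moreover have "(\<Sum>i\<in>I. w i * (x(a := y)) i) = w a * y + c"
        unfolding c_def IJ(1) using IJ by (simp add: sum.insert) (intro sum.cong, auto)
      ultimately show ?thesis
        by (simp add: A_def split: split_indicator)
    qed
    then show "(\<integral>\<^sup>+ y. indicator A (x(a := y)) \<partial>std_normal) \<le> ennreal (2 * e / \<bar>w a\<bar>)"
      using emeasure_std_normal_strip_le[OF wa e, of c] by simp
  qed
  also have "\<dots> = ennreal (2 * e / \<bar>w a\<bar>)"
    by (simp add: prob_space.emeasure_space_1[OF prob_space_std_gauss])
  finally show ?thesis
    unfolding A_def using e by (simp add: P.emeasure_eq_measure ennreal_le_iff)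
qed

section \<open>Positive semidefinite matrices\<close>

definition quad_form :: "real^'n^'n \<Rightarrow> ('n \<Rightarrow> real) \<Rightarrow> real" where
  "quad_form M x = (\<Sum>i\<in>UNIV. \<Sum>j\<in>UNIV. x i * M$i$j * x j)"

definition psd :: "real^'n^'n \<Rightarrow> bool" where
  "psd M \<longleftrightarrow> (\<forall>i j. M$i$j = M$j$i) \<and> (\<forall>x. 0 \<le> quad_form M x)"

lemma transpose_nth [simp]: "transpose A $ i $ j = A $ j $ i"
  by (simp add: transpose_def)

lemma matrix_matrix_mult_nth: "(A ** B) $ i $ j = (\<Sum>k\<in>UNIV. A$i$k * B$k$j)"
  by (simp add: matrix_matrix_mult_def)

lemma gram_nth: "(B ** transpose B) $ i $ j = (\<Sum>k\<in>UNIV. B$i$k * B$j$k)"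
  by (simp add: matrix_matrix_mult_nth)

lemma square_sum_eq_double_sum: "(\<Sum>i\<in>A. f i)\<^sup>2 = (\<Sum>i\<in>A. \<Sum>j\<in>A. f i * f j :: real)"
  by (simp add: power2_eq_square sum_product)

lemma nonneg_quadratic_imp_discriminant_le:
  fixes a b c :: real
  assumes a: "0 \<le> a" and nonneg: "\<And>t. 0 \<le> a * t\<^sup>2 + 2 * b * t + c"
  shows "b\<^sup>2 \<le> a * c"
proof (cases "a = 0")
  case True
  show ?thesis
  proof (rule ccontr)
    assume "\<not> ?thesis"
    then have "b \<noteq> 0" using True by simp
    then have "a * (- (\<bar>c\<bar> + 1) / (2 * b))\<^sup>2 + 2 * b * (- (\<bar>c\<bar> + 1) / (2 * b)) + c = c - \<bar>c\<bar> - 1"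
      using True by (simp add: field_simps)
    then show False using nonneg[of "- (\<bar>c\<bar> + 1) / (2 * b)"] by simp
  qed
next
  case False
  with a have pos: "0 < a" by simp
  then have "a * (- b / a)\<^sup>2 + 2 * b * (- b / a) + c = c - b\<^sup>2 / a"
    by (simp add: field_simps power2_eq_square)
  then have "b\<^sup>2 / a \<le> c"
    using nonneg[of "- b / a"] by simp
  then show ?thesis
    using pos by (simp add: field_simps mult.commute)
qed

lemma quad_form_add_basis:
  fixes S :: "real^'n^'n"
  assumes sym: "\<And>i j. S$i$j = S$j$i"
  shows "quad_form S (\<lambda>i. x i + t * (if i = a then 1 else 0))
    = S$a$a * t\<^sup>2 + 2 * (\<Sum>i\<in>UNIV. x i * S$i$a) * t + quad_form S x"
proof -
  have if_sum: "(\<Sum>j\<in>A. if P then f j else 0) = (if P then (\<Sum>j\<in>A. f j) else 0)" for P A and f :: "'n \<Rightarrow> real"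
    by auto
  have "quad_form S (\<lambda>i. x i + t * (if i = a then 1 else 0)) =
     (\<Sum>i\<in>UNIV. \<Sum>j\<in>UNIV. x i * S$i$j * x j + t * (if i = a then S$a$j * x j else 0)
        + t * (if j = a then x i * S$i$a else 0)
        + t\<^sup>2 * (if i = a then if j = a then S$a$a else 0 else 0))"
    unfolding quad_form_def by (intro sum.cong refl) (auto simp: algebra_simps power2_eq_square)
  also have "\<dots> = quad_form S x + t * (\<Sum>j\<in>UNIV. S$a$j * x j) + t * (\<Sum>i\<in>UNIV. x i * S$i$a)
      + t\<^sup>2 * S$a$a"
    unfolding quad_form_def
    by (simp add: sum.distrib sum_distrib_left[symmetric] if_sum
        sum.swap[of "\<lambda>i j. t * (if j = a then x i * S$i$a else 0)"])
  also have "(\<Sum>j\<in>UNIV. S$a$j * x j) = (\<Sum>i\<in>UNIV. x i * S$i$a)"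
    by (intro sum.cong refl) (simp add: sym mult.commute)
  finally show ?thesis
    by (simp add: algebra_simps)
qed

lemma
  fixes S :: "real^'n^'n"
  assumes "psd S"
  shows psd_diag_nonneg: "0 \<le> S$a$a"
    and psd_cauchy_schwarz: "(\<Sum>i\<in>UNIV. x i * S$i$a)\<^sup>2 \<le> S$a$a * quad_form S x"
proof -
  have sym: "\<And>i j. S$i$j = S$j$i" and nonneg: "\<And>x. 0 \<le> quad_form S x"
    using assms by (auto simp: psd_def)
  have "0 \<le> quad_form S (\<lambda>i. 0 + 1 * (if i = a then 1 else 0))"
    by (rule nonneg)
  then show diag: "0 \<le> S$a$a"
    using quad_form_add_basis[OF sym, of "\<lambda>_. 0" 1 a] by (simp add: quad_form_def)
  show "(\<Sum>i\<in>UNIV. x i * S$i$a)\<^sup>2 \<le> S$a$a * quad_form S x"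
    by (rule nonneg_quadratic_imp_discriminant_le[OF diag])
       (use nonneg quad_form_add_basis[OF sym, of x] in metis)
qed

lemma psd_zero_diag_imp_zero:
  fixes S :: "real^'n^'n"
  assumes "psd S" "S$a$a = 0"
  shows "S$j$a = 0"
  using psd_cauchy_schwarz[OF assms(1), of "\<lambda>i. if i = j then 1 else 0" a] assms(2)
  by (simp add: if_distrib[of "\<lambda>x. x * _"] cong: if_cong)

text \<open>One step of a Cholesky factorization: the Schur complement of the entry \<open>S\<^sub>a\<^sub>a\<close>.\<close>

lemma psd_deflate:
  fixes S :: "real^'n^'n"
  assumes S: "psd S" and pos: "0 < S$a$a"
  defines "v \<equiv> \<lambda>i. S$i$a / sqrt (S$a$a)"
  shows "psd (\<chi> i j. S$i$j - v i * v j)" and "v a * v j = S$j$a"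
proof -
  have sym: "\<And>i j. S$i$j = S$j$i"
    using S by (auto simp: psd_def)
  have "(\<Sum>i\<in>UNIV. x i * v i)\<^sup>2 = (\<Sum>i\<in>UNIV. x i * S$i$a)\<^sup>2 / S$a$a" for x
    using pos by (simp add: v_def sum_divide_distrib[symmetric] power_divide)
  also have "\<dots> x \<le> quad_form S x" for x
    using psd_cauchy_schwarz[OF S, of x a] pos by (simp add: field_simps)
  finally have le: "(\<Sum>i\<in>UNIV. x i * v i)\<^sup>2 \<le> quad_form S x" for x .
  have "quad_form (\<chi> i j. S$i$j - v i * v j) x = quad_form S x - (\<Sum>i\<in>UNIV. x i * v i)\<^sup>2" for x
    unfolding quad_form_def square_sum_eq_double_sum
    by (simp add: sum_subtractf[symmetric] algebra_simps)
  with le show "psd (\<chi> i j. S$i$j - v i * v j)"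
    unfolding psd_def by (simp add: sym mult.commute)
  show "v a * v j = S$j$a"
    using pos by (simp add: v_def sym[of a j])
qed

lemma psd_deflate_support:
  fixes S :: "real^'n^'n"
  assumes S: "psd S" and pos: "0 < S$a$a"
    and supp: "\<And>i j. S$i$j \<noteq> 0 \<Longrightarrow> i \<in> insert a J \<and> j \<in> insert a J"
  defines "v \<equiv> \<lambda>i. S$i$a / sqrt (S$a$a)"
  assumes nz: "(\<chi> i j. S$i$j - v i * v j) $ i $ j \<noteq> 0"
  shows "i \<in> J \<and> j \<in> J"
proof -
  have sym: "\<And>i j. S$i$j = S$j$i"
    using S by (auto simp: psd_def)
  have va: "v a * v j = S$j$a" for j
    using psd_deflate(2)[OF S pos] by (simp add: v_def)
  have v_zero: "v k = 0" if "k \<notin> insert a J" for k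
    using supp[of k a] that by (auto simp: v_def)
  have "i \<noteq> a" "j \<noteq> a"
    using nz va[of i] va[of j] sym[of a j] by (auto simp: mult.commute)
  moreover have "i \<in> insert a J \<and> j \<in> insert a J"
  proof (rule ccontr)
    assume "\<not> ?thesis"
    then have "S$i$j = 0" "v i * v j = 0"
      using supp[of i j] v_zero[of i] v_zero[of j] by auto
    with nz show False
      by simp
  qed
  ultimately show ?thesis
    by simp
qed

lemma gram_add_column:
  fixes B :: "real^'n^'n" and v :: "'n \<Rightarrow> real"
  assumes "\<And>i. B$i$a = 0"
  defines "B' \<equiv> \<chi> i k. B$i$k + (if k = a then v i else 0)"
  shows "B' ** transpose B' = B ** transpose B + (\<chi> i j. v i * v j)"
proof -
  have "(B' ** transpose B')$i$j = (\<Sum>k\<in>UNIV. B$i$k * B$j$k + (if k = a then v i * v j else 0))" for i j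
    unfolding gram_nth B'_def by (intro sum.cong refl) (auto simp: assms algebra_simps)
  then show ?thesis
    by (simp add: vec_eq_iff sum.distrib gram_nth)
qed

text \<open>Cholesky factorization by induction on the support \<open>J\<close>, one column at a time.\<close>

lemma psd_factor_supported:
  fixes S :: "real^'n^'n"
  assumes "finite J" "psd S" "\<And>i j. S$i$j \<noteq> 0 \<Longrightarrow> i \<in> J \<and> j \<in> J"
  shows "\<exists>B. B ** transpose B = S \<and> (\<forall>i k. B$i$k \<noteq> 0 \<longrightarrow> k \<in> J)"
  using assms
proof (induction J arbitrary: S rule: finite_induct)
  case empty
  then have "S = 0"
    by (auto simp: vec_eq_iff)
  then show ?case
    by (intro exI[of _ 0]) (auto simp: vec_eq_iff gram_nth)
next
  case (insert a J)
  show ?case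
  proof (cases "S$a$a = 0")
    case True
    have sym: "\<And>i j. S$i$j = S$j$i"
      using insert.prems(1) by (auto simp: psd_def)
    then have "S$j$a = 0" "S$a$j = 0" for j
      using psd_zero_diag_imp_zero[OF insert.prems(1) True] by metis+
    then have "\<And>i j. S$i$j \<noteq> 0 \<Longrightarrow> i \<in> J \<and> j \<in> J"
      using insert.prems(2) by (metis insert_iff)
    with insert.IH[OF insert.prems(1)] show ?thesis
      by blast
  next
    case False
    then have pos: "0 < S$a$a"
      using psd_diag_nonneg[OF insert.prems(1), of a] by simp
    define v where "v i = S$i$a / sqrt (S$a$a)" for i
    obtain B where B: "B ** transpose B = (\<chi> i j. S$i$j - v i * v j)" "\<forall>i k. B$i$k \<noteq> 0 \<longrightarrow> k \<in> J"
      using insert.IH psd_deflate(1)[OF insert.prems(1) pos]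
        psd_deflate_support[OF insert.prems(1) pos insert.prems(2)]
      unfolding v_def by blast
    have column_a: "B$i$a = 0" for i
      using B(2) insert.hyps(2) by auto
    define B' where "B' = (\<chi> i k. B$i$k + (if k = a then v i else 0))"
    from gram_add_column[of B a, OF column_a, of v] B(1) have "B' ** transpose B' = S"
      by (simp add: vec_eq_iff B'_def)
    moreover have "\<forall>i k. B'$i$k \<noteq> 0 \<longrightarrow> k \<in> insert a J"
      using B(2) by (auto simp: B'_def)
    ultimately show ?thesis
      by blast
  qed
qed

lemma cov_factor_gram:
  fixes S :: "real^'n::finite^'n"
  assumes "psd S"
  shows "cov_factor S ** transpose (cov_factor S) = S"
proof -
  have "\<exists>B::real^'n^'n. B ** transpose B = S"
    using psd_factor_supported[of UNIV S] assms by auto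
  then show ?thesis
    unfolding cov_factor_def by (rule someI_ex)
qed

lemma quad_form_gram:
  fixes P :: "real^'m::finite^'n::finite"
  shows "quad_form (P ** transpose P) x = (\<Sum>c\<in>UNIV. (\<Sum>i\<in>UNIV. x i * P$i$c)\<^sup>2)"
proof -
  have "quad_form (P ** transpose P) x
      = (\<Sum>i\<in>UNIV. \<Sum>j\<in>UNIV. \<Sum>c\<in>UNIV. (x i * P$i$c) * (x j * P$j$c))"
    unfolding quad_form_def gram_nth
    by (intro sum.cong refl) (simp add: sum_distrib_left sum_distrib_right mult_ac)
  also have "\<dots> = (\<Sum>i\<in>UNIV. \<Sum>c\<in>UNIV. \<Sum>j\<in>UNIV. (x i * P$i$c) * (x j * P$j$c))"
    by (intro sum.cong refl sum.swap)
  also have "\<dots> = (\<Sum>c\<in>UNIV. \<Sum>i\<in>UNIV. \<Sum>j\<in>UNIV. (x i * P$i$c) * (x j * P$j$c))"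
    by (rule sum.swap)
  finally show ?thesis
    by (simp add: square_sum_eq_double_sum)
qed

lemma psd_gram: "psd (P ** transpose P)"
  unfolding psd_def quad_form_gram gram_nth
  by (auto simp: mult.commute intro!: sum_nonneg)

lemma psd_scaleR: "psd M \<Longrightarrow> 0 \<le> a \<Longrightarrow> psd (a *\<^sub>R M)"
  unfolding psd_def quad_form_def by (auto simp: sum_distrib_left[symmetric] mult_ac)

lemma psd_trace_nonneg: "psd M \<Longrightarrow> 0 \<le> trace M"
  unfolding trace_def by (intro sum_nonneg psd_diag_nonneg)

section \<open>The normalized adjacency matrix\<close>

lemma weighted_variance_eq:
  fixes a y :: "'a \<Rightarrow> real"
  shows "(\<Sum>j\<in>A. a j) * (\<Sum>j\<in>A. a j * (y j)\<^sup>2) - (\<Sum>j\<in>A. a j * y j)\<^sup>2 =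
     (\<Sum>j\<in>A. \<Sum>k\<in>A. a j * a k * (y j - y k)\<^sup>2) / 2"
proof -
  have "a j * a k * (y j - y k)\<^sup>2 = a j * a k * (y j)\<^sup>2 + a j * a k * (y k)\<^sup>2 - 2 * ((a j * y j) * (a k * y k))"
    for j k by (simp add: power2_eq_square algebra_simps)
  then have "(\<Sum>j\<in>A. \<Sum>k\<in>A. a j * a k * (y j - y k)\<^sup>2) =
     (\<Sum>j\<in>A. \<Sum>k\<in>A. a j * a k * (y j)\<^sup>2) + (\<Sum>j\<in>A. \<Sum>k\<in>A. a j * a k * (y k)\<^sup>2)
      - 2 * (\<Sum>j\<in>A. \<Sum>k\<in>A. (a j * y j) * (a k * y k))"
    by (simp only: sum.distrib sum_subtractf sum_distrib_left)
  also have "(\<Sum>j\<in>A. \<Sum>k\<in>A. a j * a k * (y j)\<^sup>2) = (\<Sum>j\<in>A. a j * (y j)\<^sup>2) * (\<Sum>k\<in>A. a k)"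
    unfolding sum_product by (simp add: algebra_simps)
  also have "(\<Sum>j\<in>A. \<Sum>k\<in>A. a j * a k * (y k)\<^sup>2) = (\<Sum>j\<in>A. a j) * (\<Sum>j\<in>A. a j * (y j)\<^sup>2)"
    unfolding sum_product by (simp add: algebra_simps)
  also have "(\<Sum>j\<in>A. \<Sum>k\<in>A. (a j * y j) * (a k * y k)) = (\<Sum>j\<in>A. a j * y j)\<^sup>2"
    by (simp add: square_sum_eq_double_sum)
  finally show ?thesis
    by (simp add: mult.commute)
qed

lemma weighted_variance_ge:
  fixes a y :: "'a \<Rightarrow> real"
  assumes "finite A" "i \<in> A" "\<And>j. j \<in> A \<Longrightarrow> 0 \<le> a j" "1 \<le> a i"
  shows "(\<Sum>k\<in>A. a k * (y i - y k)\<^sup>2) / 2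
    \<le> (\<Sum>j\<in>A. a j) * (\<Sum>j\<in>A. a j * (y j)\<^sup>2) - (\<Sum>j\<in>A. a j * y j)\<^sup>2"
proof -
  have "a k * (y i - y k)\<^sup>2 \<le> a i * a k * (y i - y k)\<^sup>2" if "k \<in> A" for k
  proof -
    have "0 \<le> a k * (y i - y k)\<^sup>2"
      using assms(3)[OF that] by simp
    from mult_right_mono[OF assms(4) this] show ?thesis
      by (simp add: mult.assoc)
  qed
  then have "(\<Sum>k\<in>A. a k * (y i - y k)\<^sup>2) \<le> (\<Sum>k\<in>A. a i * a k * (y i - y k)\<^sup>2)"
    by (rule sum_mono)
  also have "\<dots> \<le> (\<Sum>j\<in>A. \<Sum>k\<in>A. a j * a k * (y j - y k)\<^sup>2)"
    using assms by (intro member_le_sum[of i A "\<lambda>j. \<Sum>k\<in>A. a j * a k * (y j - y k)\<^sup>2"] sum_nonneg) auto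
  finally show ?thesis
    unfolding weighted_variance_eq by simp
qed

definition deg_scale :: "('n::finite \<Rightarrow> 'n \<Rightarrow> bool) \<Rightarrow> 'n \<Rightarrow> real" where
  "deg_scale E i = 1 / sqrt (1 + degree E i)"

definition loop_adj :: "('n::finite \<Rightarrow> 'n \<Rightarrow> bool) \<Rightarrow> 'n \<Rightarrow> 'n \<Rightarrow> real" where
  "loop_adj E i j = (if E i j then 1 else 0) + (if i = j then 1 else 0)"

definition adj_gap :: "('n::finite \<Rightarrow> 'n \<Rightarrow> bool) \<Rightarrow> real" where
  "adj_gap E = Min (range (\<lambda>i. (deg_scale E i)\<^sup>2))"

lemma degree_nonneg: "0 \<le> degree E i"
  by (simp add: degree_def adj_mat_def sum_nonneg)

lemma loop_adj_row_sum: "(\<Sum>j\<in>UNIV. loop_adj E i j) = 1 + degree E i"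
  by (simp add: loop_adj_def degree_def adj_mat_def sum.distrib)

lemma loop_adj_nonneg: "0 \<le> loop_adj E i j"
  by (simp add: loop_adj_def)

lemma loop_adj_diag: "1 \<le> loop_adj E i i"
  by (simp add: loop_adj_def)

lemma deg_scale_pos: "0 < deg_scale E i"
  using degree_nonneg[of E i] by (simp add: deg_scale_def)

lemma deg_scale_sq: "(deg_scale E i)\<^sup>2 * (1 + degree E i) = 1"
  using degree_nonneg[of E i] by (simp add: deg_scale_def power_divide)

lemma adj_gap_pos: "0 < adj_gap E"
proof -
  have "adj_gap E \<in> range (\<lambda>i. (deg_scale E i)\<^sup>2)"
    unfolding adj_gap_def by (rule Min_in) auto
  then obtain i where "adj_gap E = (deg_scale E i)\<^sup>2"
    by blast
  then show ?thesis
    using deg_scale_pos[of E i] by simp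
qed

lemma adj_gap_le: "adj_gap E \<le> (deg_scale E i)\<^sup>2"
  unfolding adj_gap_def by (rule Min_le) auto

lemma norm_adj_nth: "norm_adj E $ i $ j = deg_scale E i * loop_adj E i j * deg_scale E j"
proof -
  have "Dtil_inv_sqrt E $ i $ k = (if i = k then deg_scale E i else 0)" for i k
    by (simp add: Dtil_inv_sqrt_def deg_scale_def)
  moreover have "(adj_mat E + mat 1) $ i $ j = loop_adj E i j"
    by (simp add: adj_mat_def mat_def loop_adj_def)
  ultimately show ?thesis
    unfolding norm_adj_def matrix_matrix_mult_nth
    by (simp add: if_distrib[of "\<lambda>x. x * _"] if_distrib[of "\<lambda>x. _ * x"] cong: if_cong)
qed

lemma inner_vec_sum: "x \<bullet> y = (\<Sum>i\<in>UNIV. x$i * y$i)"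
  by (simp add: inner_vec_def)

lemma matrix_vector_mult_nth: "(M *v x) $ i = (\<Sum>j\<in>UNIV. M$i$j * x$j)"
  by (simp add: matrix_vector_mult_def)

context
  fixes E :: "'n::finite \<Rightarrow> 'n \<Rightarrow> bool"
  assumes sym: "\<And>i j. E i j \<longleftrightarrow> E j i"
begin

lemma loop_adj_sym: "loop_adj E i j = loop_adj E j i"
  using sym by (auto simp: loop_adj_def)

lemma norm_adj_sym: "norm_adj E $ i $ j = norm_adj E $ j $ i"
  by (simp add: norm_adj_nth loop_adj_sym)

lemma transpose_norm_adj: "transpose (norm_adj E) = norm_adj E"
  by (simp add: vec_eq_iff norm_adj_sym)

lemma inner_norm_adj_commute: "(norm_adj E *v u) \<bullet> v = u \<bullet> (norm_adj E *v v)"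
proof -
  have "(norm_adj E *v u) \<bullet> v = (\<Sum>i\<in>UNIV. \<Sum>j\<in>UNIV. norm_adj E $i$j * u$j * v$i)"
    by (simp add: inner_vec_sum matrix_vector_mult_nth sum_distrib_right)
  also have "\<dots> = (\<Sum>j\<in>UNIV. \<Sum>i\<in>UNIV. norm_adj E $i$j * u$j * v$i)"
    by (rule sum.swap)
  also have "\<dots> = u \<bullet> (norm_adj E *v v)"
    by (simp add: inner_vec_sum matrix_vector_mult_nth sum_distrib_left norm_adj_sym algebra_simps)
  finally show ?thesis .
qed

text \<open>In the coordinates \<open>y\<^sub>i = x\<^sub>i / sqrt (1 + d\<^sub>i)\<close> the normalization disappears:
  \<open>\<hat>A\<close> acts through the unweighted \<open>A + I\<close>.\<close>

abbreviation scaled :: "real^'n \<Rightarrow> 'n \<Rightarrow> real" where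
  "scaled x i \<equiv> deg_scale E i * x$i"

lemma inner_self_eq_loop_sum:
  shows "x \<bullet> x = (\<Sum>i\<in>UNIV. \<Sum>j\<in>UNIV. loop_adj E i j * (scaled x i)\<^sup>2)"
    and "x \<bullet> x = (\<Sum>i\<in>UNIV. \<Sum>j\<in>UNIV. loop_adj E i j * (scaled x j)\<^sup>2)"
proof -
  have "(1 + degree E i) * (scaled x i)\<^sup>2 = ((deg_scale E i)\<^sup>2 * (1 + degree E i)) * (x$i)\<^sup>2" for i
    by (simp add: power_mult_distrib algebra_simps)
  then have "(x$i)\<^sup>2 = (1 + degree E i) * (scaled x i)\<^sup>2" for i
    by (simp add: deg_scale_sq)
  then have eq: "x \<bullet> x = (\<Sum>i\<in>UNIV. (1 + degree E i) * (scaled x i)\<^sup>2)"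
    unfolding inner_vec_sum power2_eq_square[symmetric] by simp
  then show "x \<bullet> x = (\<Sum>i\<in>UNIV. \<Sum>j\<in>UNIV. loop_adj E i j * (scaled x i)\<^sup>2)"
    by (simp add: loop_adj_row_sum[symmetric] sum_distrib_right)
  from eq have "x \<bullet> x = (\<Sum>j\<in>UNIV. \<Sum>i\<in>UNIV. loop_adj E i j * (scaled x j)\<^sup>2)"
    by (simp add: loop_adj_row_sum[symmetric] sum_distrib_right loop_adj_sym[of _ "_"])
  also have "\<dots> = (\<Sum>i\<in>UNIV. \<Sum>j\<in>UNIV. loop_adj E i j * (scaled x j)\<^sup>2)"
    by (rule sum.swap)
  finally show "x \<bullet> x = (\<Sum>i\<in>UNIV. \<Sum>j\<in>UNIV. loop_adj E i j * (scaled x j)\<^sup>2)" .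
qed

lemma norm_adj_mult_nth: "(norm_adj E *v x) $ i = deg_scale E i * (\<Sum>j\<in>UNIV. loop_adj E i j * scaled x j)"
  by (simp add: matrix_vector_mult_nth norm_adj_nth sum_distrib_left algebra_simps)

lemma lap_form_eq:
  "x \<bullet> (norm_lap E *v x) = (\<Sum>i\<in>UNIV. \<Sum>j\<in>UNIV. loop_adj E i j * (scaled x i - scaled x j)\<^sup>2) / 2"
proof -
  have "loop_adj E i j * (scaled x i - scaled x j)\<^sup>2 = loop_adj E i j * (scaled x i)\<^sup>2
      + loop_adj E i j * (scaled x j)\<^sup>2 - 2 * (loop_adj E i j * scaled x i * scaled x j)" for i j
    by (simp add: power2_eq_square algebra_simps)
  then have "(\<Sum>i\<in>UNIV. \<Sum>j\<in>UNIV. loop_adj E i j * (scaled x i - scaled x j)\<^sup>2)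
      = (\<Sum>i\<in>UNIV. \<Sum>j\<in>UNIV. loop_adj E i j * (scaled x i)\<^sup>2)
        + (\<Sum>i\<in>UNIV. \<Sum>j\<in>UNIV. loop_adj E i j * (scaled x j)\<^sup>2)
        - 2 * (\<Sum>i\<in>UNIV. \<Sum>j\<in>UNIV. loop_adj E i j * scaled x i * scaled x j)"
    by (simp only: sum.distrib sum_subtractf sum_distrib_left)
  also have "\<dots> = x \<bullet> x + x \<bullet> x - 2 * (\<Sum>i\<in>UNIV. \<Sum>j\<in>UNIV. loop_adj E i j * scaled x i * scaled x j)"
    by (simp only: inner_self_eq_loop_sum[of x, symmetric])
  finally have "(\<Sum>i\<in>UNIV. \<Sum>j\<in>UNIV. loop_adj E i j * (scaled x i - scaled x j)\<^sup>2)
      = x \<bullet> x + x \<bullet> x - 2 * (\<Sum>i\<in>UNIV. \<Sum>j\<in>UNIV. loop_adj E i j * scaled x i * scaled x j)" .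
  moreover have "x \<bullet> (norm_adj E *v x) = (\<Sum>i\<in>UNIV. \<Sum>j\<in>UNIV. loop_adj E i j * scaled x i * scaled x j)"
    by (simp add: inner_vec_sum norm_adj_mult_nth sum_distrib_left algebra_simps)
  ultimately show ?thesis
    by (simp add: norm_lap_def matrix_vector_mult_diff_rdistrib inner_diff_right)
qed

lemma lap_form_nonneg: "0 \<le> x \<bullet> (norm_lap E *v x)"
  unfolding lap_form_eq by (intro divide_nonneg_pos sum_nonneg mult_nonneg_nonneg loop_adj_nonneg) auto

lemma lap_form_le: "x \<bullet> (norm_lap E *v x) \<le> 2 * (x \<bullet> x)"
proof -
  have "loop_adj E i j * (scaled x i - scaled x j)\<^sup>2
      \<le> 2 * (loop_adj E i j * (scaled x i)\<^sup>2) + 2 * (loop_adj E i j * (scaled x j)\<^sup>2)" for i j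
  proof -
    have "(scaled x i - scaled x j)\<^sup>2 \<le> 2 * (scaled x i)\<^sup>2 + 2 * (scaled x j)\<^sup>2"
      using zero_le_power2[of "scaled x i + scaled x j"] by (simp add: power2_eq_square algebra_simps)
    from mult_left_mono[OF this loop_adj_nonneg[of E i j]] show ?thesis
      by (simp add: algebra_simps)
  qed
  then have "(\<Sum>i\<in>UNIV. \<Sum>j\<in>UNIV. loop_adj E i j * (scaled x i - scaled x j)\<^sup>2)
      \<le> (\<Sum>i\<in>UNIV. \<Sum>j\<in>UNIV. 2 * (loop_adj E i j * (scaled x i)\<^sup>2) + 2 * (loop_adj E i j * (scaled x j)\<^sup>2))"
    by (intro sum_mono)
  also have "\<dots> = 2 * (x \<bullet> x) + 2 * (x \<bullet> x)"
    by (simp only: sum.distrib sum_distrib_left[symmetric] inner_self_eq_loop_sum[of x, symmetric])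
  finally have "(\<Sum>i\<in>UNIV. \<Sum>j\<in>UNIV. loop_adj E i j * (scaled x i - scaled x j)\<^sup>2)
      \<le> 2 * (x \<bullet> x) + 2 * (x \<bullet> x)" .
  then show ?thesis
    unfolding lap_form_eq by simp
qed

text \<open>The difference of the two sides is \<open>u\<^sup>T(2I - \<hat>L)u\<close> for \<open>u = x - \<hat>Ax\<close>.\<close>

lemma lap_form_norm_adj_le:
  "(norm_adj E *v x) \<bullet> (norm_lap E *v (norm_adj E *v x)) \<le> x \<bullet> (norm_lap E *v x)"
proof -
  define A where "A = norm_adj E"
  define a where "a = A *v x"
  define u where "u = x - a"
  have lap: "y \<bullet> (norm_lap E *v y) = y \<bullet> y - y \<bullet> (A *v y)" for y
    by (simp add: A_def norm_lap_def matrix_vector_mult_diff_rdistrib inner_diff_right)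
  have "x \<bullet> (A *v a) = a \<bullet> a"
    using inner_norm_adj_commute[of x a] by (simp add: A_def a_def inner_commute)
  moreover have "u \<bullet> (A *v u) = x \<bullet> a - x \<bullet> (A *v a) - a \<bullet> a + a \<bullet> (A *v a)"
    by (simp add: u_def a_def matrix_vector_mult_diff_distrib inner_diff_left inner_diff_right inner_commute)
  moreover have "u \<bullet> u = x \<bullet> x - 2 * (x \<bullet> a) + a \<bullet> a"
    by (simp add: u_def inner_diff_left inner_diff_right inner_commute)
  moreover have "u \<bullet> (norm_lap E *v u) \<le> 2 * (u \<bullet> u)"
    by (rule lap_form_le)
  ultimately show ?thesis
    unfolding A_def[symmetric] a_def[symmetric] using lap[of u] lap[of a] lap[of x]
    by (simp add: a_def)
qed

text \<open>Node by node, \<open>\<parallel>x\<parallel>\<^sup>2 - \<parallel>\<hat>Ax\<parallel>\<^sup>2\<close> is a weighted variance of \<open>scaled x\<close> over the closed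
  neighbourhood, which dominates the local term of the Dirichlet energy.\<close>

lemma norm_adj_contraction:
  "(norm_adj E *v x) \<bullet> (norm_adj E *v x) \<le> x \<bullet> x - adj_gap E * (x \<bullet> (norm_lap E *v x))"
proof -
  define m where "m i = (\<Sum>j\<in>UNIV. loop_adj E i j)" for i
  define S where "S i = (\<Sum>j\<in>UNIV. loop_adj E i j * scaled x j)" for i
  define T where "T i = (\<Sum>j\<in>UNIV. loop_adj E i j * (scaled x j)\<^sup>2)" for i
  have "(norm_adj E *v x) \<bullet> (norm_adj E *v x) = (\<Sum>i\<in>UNIV. (deg_scale E i)\<^sup>2 * (S i)\<^sup>2)"
    by (simp add: inner_vec_sum norm_adj_mult_nth S_def power2_eq_square algebra_simps)
  moreover have "x \<bullet> x = (\<Sum>i\<in>UNIV. (deg_scale E i)\<^sup>2 * (m i * T i))"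
  proof -
    have "(deg_scale E i)\<^sup>2 * m i = 1" for i
      using deg_scale_sq[of E i] by (simp add: m_def loop_adj_row_sum)
    then show ?thesis
      unfolding inner_self_eq_loop_sum(2)[of x] T_def[symmetric] by (simp add: mult.assoc[symmetric])
  qed
  moreover have "adj_gap E * (x \<bullet> (norm_lap E *v x))
      = (\<Sum>i\<in>UNIV. adj_gap E * ((\<Sum>k\<in>UNIV. loop_adj E i k * (scaled x i - scaled x k)\<^sup>2) / 2))"
    unfolding lap_form_eq by (simp add: sum_distrib_left sum_divide_distrib)
  moreover have "\<dots> \<le> (\<Sum>i\<in>UNIV. (deg_scale E i)\<^sup>2 * (m i * T i - (S i)\<^sup>2))"
  proof (intro sum_mono mult_mono adj_gap_le)
    fix i
    show "(\<Sum>k\<in>UNIV. loop_adj E i k * (scaled x i - scaled x k)\<^sup>2) / 2 \<le> m i * T i - (S i)\<^sup>2"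
      unfolding m_def T_def S_def
      by (rule weighted_variance_ge) (auto intro: loop_adj_nonneg loop_adj_diag)
  qed (auto intro!: sum_nonneg mult_nonneg_nonneg loop_adj_nonneg)
  ultimately show ?thesis
    by (simp add: sum_subtractf algebra_simps)
qed

end

section \<open>Moments of the Gaussian embedding\<close>

definition dirichlet_trace :: "('n::finite \<Rightarrow> 'n \<Rightarrow> bool) \<Rightarrow> real^'n^'n \<Rightarrow> real" where
  "dirichlet_trace E M = (\<Sum>i\<in>UNIV. \<Sum>j\<in>UNIV. norm_lap E $ i $ j * M $ i $ j)"

lemma column_nth [simp]: "column c P $ i = P $ i $ c"
  by (simp add: column_def)

lemma column_matrix_mult: "column c (M ** P) = M *v column c P"
  by (simp add: vec_eq_iff matrix_matrix_mult_nth matrix_vector_mult_nth)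

lemma trace_scaleR: "trace (a *\<^sub>R M) = a * trace M"
  by (simp add: trace_def sum_distrib_left)

lemma dirichlet_trace_scaleR: "dirichlet_trace E (a *\<^sub>R M) = a * dirichlet_trace E M"
  by (simp add: dirichlet_trace_def sum_distrib_left algebra_simps)

lemma trace_gram:
  fixes P :: "real^'m::finite^'n::finite"
  shows "trace (P ** transpose P) = (\<Sum>c\<in>UNIV. column c P \<bullet> column c P)"
  unfolding trace_def gram_nth inner_vec_sum column_nth by (rule sum.swap)

lemma dirichlet_trace_gram:
  fixes P :: "real^'m::finite^'n::finite"
  shows "dirichlet_trace E (P ** transpose P) = (\<Sum>c\<in>UNIV. column c P \<bullet> (norm_lap E *v column c P))"
proof -
  have "dirichlet_trace E (P ** transpose P)
      = (\<Sum>i\<in>UNIV. \<Sum>j\<in>UNIV. \<Sum>c\<in>UNIV. P$i$c * (norm_lap E $i$j * P$j$c))"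
    unfolding dirichlet_trace_def gram_nth by (intro sum.cong refl) (simp add: sum_distrib_left mult_ac)
  also have "\<dots> = (\<Sum>i\<in>UNIV. \<Sum>c\<in>UNIV. \<Sum>j\<in>UNIV. P$i$c * (norm_lap E $i$j * P$j$c))"
    by (intro sum.cong refl) (rule sum.swap)
  also have "\<dots> = (\<Sum>c\<in>UNIV. \<Sum>i\<in>UNIV. \<Sum>j\<in>UNIV. P$i$c * (norm_lap E $i$j * P$j$c))"
    by (rule sum.swap)
  finally show ?thesis
    unfolding inner_vec_sum matrix_vector_mult_nth by (simp add: sum_distrib_left)
qed

lemma sandwich_gram:
  fixes A :: "real^'n^'n" and K :: "real^'m^'n"
  assumes "transpose A = A"
  shows "A ** K ** transpose K ** A = (A ** K) ** transpose (A ** K)"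
  using matrix_transpose_mul[of A K] assms by (simp add: matrix_mul_assoc)

lemma psd_dirichlet_trace_nonneg:
  assumes sym: "\<And>i j. E i j \<longleftrightarrow> E j i" and "psd M"
  shows "0 \<le> dirichlet_trace E M"
  using dirichlet_trace_gram[of E "cov_factor M"] cov_factor_gram[OF \<open>psd M\<close>]
  by (auto intro!: sum_nonneg lap_form_nonneg[OF sym])

lemma dirichlet_columns: "dirichlet E C H = (\<Sum>c<C. (\<chi> i. H i c) \<bullet> (norm_lap E *v (\<chi> i. H i c)))"
  unfolding dirichlet_def inner_vec_sum matrix_vector_mult_nth by (simp add: sum_distrib_left mult_ac)

lemma frob_sq_emb_columns: "frob_sq_emb C H = (\<Sum>c<C. (\<chi> i. H i c) \<bullet> (\<chi> i. H i c))"
  unfolding frob_sq_emb_def inner_vec_sum by (simp add: sum.swap[of _ UNIV "{..<C}"] power2_eq_square)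

lemma frob_sq_emb_nonneg: "0 \<le> frob_sq_emb C H"
  by (simp add: frob_sq_emb_def sum_nonneg)

lemma
  assumes sym: "\<And>i j. E i j \<longleftrightarrow> E j i"
  shows dirichlet_nonneg: "0 \<le> dirichlet E C H"
    and dirichlet_le_frob_sq_emb: "dirichlet E C H \<le> 2 * frob_sq_emb C H"
  unfolding dirichlet_columns frob_sq_emb_columns sum_distrib_left
  by (intro sum_nonneg lap_form_nonneg[OF sym], intro sum_mono lap_form_le[OF sym])

lemma
  fixes f :: "'i \<Rightarrow> 'j \<Rightarrow> 'a \<Rightarrow> real"
  assumes "\<And>i j. i \<in> A \<Longrightarrow> j \<in> B \<Longrightarrow> integrable M (f i j)"
  shows integrable_sum_sum: "integrable M (\<lambda>x. \<Sum>i\<in>A. \<Sum>j\<in>B. f i j x)"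
    and integral_sum_sum: "(\<integral>x. (\<Sum>i\<in>A. \<Sum>j\<in>B. f i j x) \<partial>M) = (\<Sum>i\<in>A. \<Sum>j\<in>B. integral\<^sup>L M (f i j))"
proof -
  show "integrable M (\<lambda>x. \<Sum>i\<in>A. \<Sum>j\<in>B. f i j x)"
    using assms by (auto intro!: integrable_sum)
  have "(\<integral>x. (\<Sum>i\<in>A. \<Sum>j\<in>B. f i j x) \<partial>M) = (\<Sum>i\<in>A. \<integral>x. (\<Sum>j\<in>B. f i j x) \<partial>M)"
    using assms by (intro Bochner_Integration.integral_sum) (auto intro!: integrable_sum)
  also have "\<dots> = (\<Sum>i\<in>A. \<Sum>j\<in>B. integral\<^sup>L M (f i j))"
    using assms by (intro sum.cong refl Bochner_Integration.integral_sum) auto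
  finally show "(\<integral>x. (\<Sum>i\<in>A. \<Sum>j\<in>B. f i j x) \<partial>M) = (\<Sum>i\<in>A. \<Sum>j\<in>B. integral\<^sup>L M (f i j))" .
qed

lemma
  fixes S :: "real^'n::finite^'n"
  assumes c: "c < C"
  shows integrable_gauss_emb_mult:
      "integrable (std_gauss_mat C) (\<lambda>Z. gauss_emb S Z i c * gauss_emb S Z j c)"
    and integral_gauss_emb_mult:
      "integral\<^sup>L (std_gauss_mat C) (\<lambda>Z. gauss_emb S Z i c * gauss_emb S Z j c)
        = (cov_factor S ** transpose (cov_factor S)) $ i $ j"
proof -
  have inj: "inj_on (\<lambda>k::'n. (k, c)) UNIV" and sub: "(\<lambda>k::'n. (k, c)) ` UNIV \<subseteq> UNIV \<times> {..<C}"
    using c by (auto simp: inj_on_def)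
  show "integrable (std_gauss_mat C) (\<lambda>Z. gauss_emb S Z i c * gauss_emb S Z j c)"
    unfolding std_gauss_mat_def gauss_emb_def
    using integrable_std_gauss_linear_mult[OF _ _ inj sub] by simp
  show "integral\<^sup>L (std_gauss_mat C) (\<lambda>Z. gauss_emb S Z i c * gauss_emb S Z j c)
      = (cov_factor S ** transpose (cov_factor S)) $ i $ j"
    unfolding std_gauss_mat_def gauss_emb_def gram_nth
    using integral_std_gauss_linear_mult[OF _ _ inj sub] by simp
qed

lemma integral_frob_sq_gauss_emb:
  fixes S :: "real^'n::finite^'n"
  assumes "psd S"
  shows "(\<integral>Z. frob_sq_emb C (gauss_emb S Z) \<partial>std_gauss_mat C) = real C * trace S"
proof -
  have "(\<integral>Z. frob_sq_emb C (gauss_emb S Z) \<partial>std_gauss_mat C)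
      = (\<Sum>i\<in>UNIV. \<Sum>c<C. integral\<^sup>L (std_gauss_mat C) (\<lambda>Z. gauss_emb S Z i c * gauss_emb S Z i c))"
    unfolding frob_sq_emb_def power2_eq_square
    by (rule integral_sum_sum) (simp add: integrable_gauss_emb_mult)
  also have "\<dots> = real C * trace S"
    using cov_factor_gram[OF assms] by (simp add: integral_gauss_emb_mult trace_def sum_distrib_left)
  finally show ?thesis .
qed

lemma
  fixes S :: "real^'n::finite^'n"
  assumes "psd S"
  shows integrable_dirichlet_gauss_emb: "integrable (std_gauss_mat C) (\<lambda>Z. dirichlet E C (gauss_emb S Z))"
    and integral_dirichlet_gauss_emb:
      "(\<integral>Z. dirichlet E C (gauss_emb S Z) \<partial>std_gauss_mat C) = real C * dirichlet_trace E S"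
proof -
  have eq: "dirichlet E C (gauss_emb S Z) = (\<Sum>c<C. \<Sum>i\<in>UNIV. \<Sum>j\<in>UNIV.
      norm_lap E $ i $ j * (gauss_emb S Z i c * gauss_emb S Z j c))" for Z
    by (simp add: dirichlet_def mult_ac)
  have int: "integrable (std_gauss_mat C) (\<lambda>Z. \<Sum>i\<in>UNIV. \<Sum>j\<in>UNIV.
      norm_lap E $ i $ j * (gauss_emb S Z i c * gauss_emb S Z j c))"
    and integral: "(\<integral>Z. (\<Sum>i\<in>UNIV. \<Sum>j\<in>UNIV.
      norm_lap E $ i $ j * (gauss_emb S Z i c * gauss_emb S Z j c)) \<partial>std_gauss_mat C)
      = dirichlet_trace E S" if "c \<in> {..<C}" for c
    using that cov_factor_gram[OF assms]
    by (simp_all add: integrable_sum_sum integral_sum_sum integrable_gauss_emb_mult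
        integral_gauss_emb_mult dirichlet_trace_def)
  show "integrable (std_gauss_mat C) (\<lambda>Z. dirichlet E C (gauss_emb S Z))"
    unfolding eq using int by (auto intro!: integrable_sum)
  show "(\<integral>Z. dirichlet E C (gauss_emb S Z) \<partial>std_gauss_mat C) = real C * dirichlet_trace E S"
    unfolding eq using int integral by (simp add: integral_sum)
qed

section \<open>The ReLU covariance map\<close>

lemma gauss_G_nth:
  "gauss_G relu S $ i $ j = (\<integral>z. relu (\<Sum>k\<in>UNIV. cov_factor S $ i $ k * z k)
      * relu (\<Sum>k\<in>UNIV. cov_factor S $ j $ k * z k) \<partial>std_gauss (UNIV::'n::finite set))"
  by (simp add: gauss_G_def matrix_vector_mult_nth)

lemma integrable_relu_linear_mult:
  fixes u v :: "'n::finite \<Rightarrow> real"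
  shows "integrable (std_gauss UNIV) (\<lambda>z. relu (\<Sum>k\<in>UNIV. u k * z k) * relu (\<Sum>k\<in>UNIV. v k * z k))"
proof (rule Bochner_Integration.integrable_bound)
  let ?f = "\<lambda>(w :: 'n \<Rightarrow> real) z. \<Sum>k\<in>UNIV. w k * z k"
  show "integrable (std_gauss UNIV) (\<lambda>z. ?f u z * ?f u z + ?f v z * ?f v z)"
    using integrable_std_gauss_linear_mult[of UNIV UNIV id u u]
      integrable_std_gauss_linear_mult[of UNIV UNIV id v v]
    by (intro Bochner_Integration.integrable_add) simp_all
  have "\<bar>relu a * relu b\<bar> \<le> a * a + b * b" for a b :: real
  proof -
    have "\<bar>relu a * relu b\<bar> \<le> \<bar>a\<bar> * \<bar>b\<bar>"
      unfolding abs_mult by (intro mult_mono abs_relu_le) auto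
    also have "\<dots> \<le> a * a + b * b"
    proof -
      have "2 * \<bar>a\<bar> * \<bar>b\<bar> \<le> a * a + b * b"
        using sum_squares_bound[of "\<bar>a\<bar>" "\<bar>b\<bar>"] by (simp add: power2_eq_square)
      moreover have "0 \<le> \<bar>a\<bar> * \<bar>b\<bar>"
        by simp
      ultimately show ?thesis
        by linarith
    qed
    finally show ?thesis .
  qed
  then show "AE z in std_gauss UNIV. norm (relu (?f u z) * relu (?f v z)) \<le> norm (?f u z * ?f u z + ?f v z * ?f v z)"
    by (intro AE_I2) (simp add: order.trans[OF _ abs_ge_self])
qed measurable

lemma psd_gauss_G: "psd (gauss_G relu (S::real^'n::finite^'n))"
  unfolding psd_def
proof (intro conjI allI)
  fix i j
  show "gauss_G relu S $ i $ j = gauss_G relu S $ j $ i"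
    unfolding gauss_G_nth by (simp add: mult.commute)
next
  fix x :: "'n \<Rightarrow> real"
  define r where "r i z = relu (\<Sum>k\<in>UNIV. cov_factor S $ i $ k * z k)" for i z
  have "quad_form (gauss_G relu S) x = (\<integral>z. (\<Sum>i\<in>UNIV. \<Sum>j\<in>UNIV. x i * (r i z * r j z) * x j) \<partial>std_gauss UNIV)"
    unfolding quad_form_def gauss_G_nth r_def
    by (simp add: integrable_relu_linear_mult integrable_sum integral_sum)
  also have "\<dots> = (\<integral>z. (\<Sum>i\<in>UNIV. x i * r i z)\<^sup>2 \<partial>std_gauss UNIV)"
    by (simp add: square_sum_eq_double_sum mult_ac)
  finally show "0 \<le> quad_form (gauss_G relu S) x"
    by simp
qed

lemma gauss_G_diag:
  assumes "psd S"
  shows "gauss_G relu S $ i $ i = S $ i $ i / 2"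
proof -
  have "gauss_G relu S $ i $ i = (\<integral>z. (relu (\<Sum>k\<in>UNIV. cov_factor S $ i $ k * z k))\<^sup>2 \<partial>std_gauss UNIV)"
    unfolding gauss_G_nth by (simp add: power2_eq_square)
  also have "\<dots> = (\<Sum>k\<in>UNIV. (cov_factor S $ i $ k)\<^sup>2) / 2"
    by (rule integral_std_gauss_relu_linear_sq) simp
  also have "\<dots> = S $ i $ i / 2"
    using gram_nth[of "cov_factor S" i i] cov_factor_gram[OF assms] by (simp add: power2_eq_square)
  finally show ?thesis .
qed

lemma trace_gauss_G: "psd S \<Longrightarrow> trace (gauss_G relu S) = trace S / 2"
  by (simp add: trace_def gauss_G_diag sum_divide_distrib)

section \<open>Graph embedding variation of a Gaussian embedding\<close>

lemma ex_card_mult_ge_sum: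
  fixes f :: "'a \<Rightarrow> real"
  assumes "finite A" "A \<noteq> {}"
  shows "\<exists>i\<in>A. sum f A \<le> real (card A) * f i"
proof (rule ccontr)
  assume "\<not> ?thesis"
  then have "(\<Sum>i\<in>A. real (card A) * f i) < (\<Sum>i\<in>A. sum f A)"
    using assms by (intro sum_strict_mono) auto
  then show False
    by (simp add: sum_distrib_left)
qed

context
  fixes E :: "'n::finite \<Rightarrow> 'n \<Rightarrow> bool"
  assumes sym: "\<And>i j. E i j \<longleftrightarrow> E j i"
begin

lemma dirichlet_ratio_le_2: "dirichlet E C H / frob_sq_emb C H \<le> 2"
proof (cases "frob_sq_emb C H = 0")
  case False
  then have "0 < frob_sq_emb C H"
    using frob_sq_emb_nonneg[of C H] by simp
  then show ?thesis
    using dirichlet_le_frob_sq_emb[of E C H, OF sym] by (simp add: field_simps)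
qed simp

text \<open>If \<open>\<bar>H i c\<bar> \<ge> sqrt \<delta>\<close> then \<open>frob_sq_emb C H \<ge> \<delta>\<close>; otherwise use the bound 2.\<close>

lemma dirichlet_ratio_le:
  assumes c: "c < C" and \<delta>: "0 < \<delta>"
  shows "dirichlet E C H / frob_sq_emb C H
    \<le> dirichlet E C H / \<delta> + (if \<bar>H i c\<bar> < sqrt \<delta> then 2 else 0)"
proof (cases "\<delta> \<le> frob_sq_emb C H")
  case True
  then have "dirichlet E C H / frob_sq_emb C H \<le> dirichlet E C H / \<delta>"
    using \<delta> dirichlet_nonneg[of E, OF sym] by (intro divide_left_mono) auto
  then show ?thesis
    by simp
next
  case False
  have "(H i c)\<^sup>2 \<le> (\<Sum>c'<C. (H i c')\<^sup>2)"
    using c by (intro member_le_sum) auto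
  also have "\<dots> \<le> frob_sq_emb C H"
    unfolding frob_sq_emb_def by (intro member_le_sum sum_nonneg) auto
  finally have "\<bar>H i c\<bar> < sqrt \<delta>"
    using False real_sqrt_less_mono[of "(H i c)\<^sup>2" \<delta>] by simp
  moreover have "0 \<le> dirichlet E C H / \<delta>"
    using \<delta> dirichlet_nonneg[of E, OF sym] by simp
  ultimately show ?thesis
    using dirichlet_ratio_le_2[of C H] by simp
qed

end

lemma ex_cov_factor_entry_ge:
  fixes S :: "real^'n::finite^'n"
  assumes "psd S"
  shows "\<exists>i k. trace S \<le> (real CARD('n))\<^sup>2 * (cov_factor S $ i $ k)\<^sup>2"
proof -
  define n where "n = real CARD('n)"
  obtain i where i: "trace S \<le> n * S$i$i"
    using ex_card_mult_ge_sum[of "UNIV::'n set" "\<lambda>i. S$i$i"] by (auto simp: trace_def n_def)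
  have "S$i$i = (\<Sum>k\<in>UNIV. (cov_factor S $ i $ k)\<^sup>2)"
    using gram_nth[of "cov_factor S" i i] cov_factor_gram[OF assms] by (simp add: power2_eq_square)
  then obtain k where k: "S$i$i \<le> n * (cov_factor S $ i $ k)\<^sup>2"
    using ex_card_mult_ge_sum[of "UNIV::'n set" "\<lambda>k. (cov_factor S $ i $ k)\<^sup>2"] by (auto simp: n_def)
  have "trace S \<le> n * (n * (cov_factor S $ i $ k)\<^sup>2)"
    using order.trans[OF i mult_left_mono[OF k]] by (simp add: n_def)
  then show ?thesis
    unfolding n_def by (auto simp: power2_eq_square mult_ac)
qed

lemma gauss_emb_eq_linear_form:
  assumes "c < C"
  shows "gauss_emb S Z i c
    = (\<Sum>p\<in>UNIV \<times> {..<C}. (if snd p = c then cov_factor S $ i $ fst p else 0) * Z p)"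
proof -
  have "(\<Sum>p\<in>UNIV \<times> {..<C}. (if snd p = c then cov_factor S $ i $ fst p else 0) * Z p)
      = (\<Sum>k\<in>UNIV. \<Sum>c'<C. (if c' = c then cov_factor S $ i $ k else 0) * Z (k, c'))"
    by (simp add: sum.cartesian_product split_def)
  also have "\<dots> = gauss_emb S Z i c"
    using assms by (simp add: gauss_emb_def if_distrib[of "\<lambda>x. x * _"] cong: if_cong)
  finally show ?thesis ..
qed

text \<open>The coordinate \<open>H\<^sub>i\<^sub>c\<close> is a Gaussian linear form in \<open>Z\<close>; its coefficient on \<open>Z\<^sub>k\<^sub>c\<close>
  is the large entry of \<open>cov_factor S\<close> from \<open>ex_cov_factor_entry_ge\<close>.\<close>

lemma ex_gauss_emb_small_prob_le:
  fixes S :: "real^'n::finite^'n"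
  assumes S: "psd S" and T: "0 < T" "T \<le> trace S" and \<delta>: "0 < \<delta>" and c: "c < C"
  shows "\<exists>i. measure (std_gauss_mat C) {Z \<in> space (std_gauss_mat C). \<bar>gauss_emb S Z i c\<bar> < sqrt \<delta>}
    \<le> 2 * real CARD('n) * sqrt \<delta> / sqrt T"
proof -
  define n where "n = real CARD('n)"
  have n: "0 < n"
    by (simp add: n_def)
  obtain i k where "trace S \<le> n\<^sup>2 * (cov_factor S $ i $ k)\<^sup>2"
    using ex_cov_factor_entry_ge[OF S] by (auto simp: n_def)
  then have "T \<le> (n * \<bar>cov_factor S $ i $ k\<bar>)\<^sup>2"
    using T(2) by (simp add: power_mult_distrib)
  then have le: "sqrt T \<le> n * \<bar>cov_factor S $ i $ k\<bar>"
    using real_sqrt_le_mono n by fastforce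
  moreover have "0 < sqrt T"
    using T by simp
  ultimately have Bik: "0 < \<bar>cov_factor S $ i $ k\<bar>"
    using n by (auto simp: zero_less_mult_iff)
  have "2 * sqrt \<delta> / \<bar>cov_factor S $ i $ k\<bar> = 2 * n * sqrt \<delta> / (n * \<bar>cov_factor S $ i $ k\<bar>)"
    using n by simp
  also have "\<dots> \<le> 2 * n * sqrt \<delta> / sqrt T"
    using le T n \<delta> by (intro frac_le) auto
  finally have Bik_le: "2 * sqrt \<delta> / \<bar>cov_factor S $ i $ k\<bar> \<le> 2 * n * sqrt \<delta> / sqrt T" .
  define w where "w p = (if snd p = c then cov_factor S $ i $ fst p else 0)" for p :: "'n \<times> nat"
  have set_eq: "{Z \<in> space (std_gauss_mat C). \<bar>gauss_emb S Z i c\<bar> < sqrt \<delta>}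
      = {Z \<in> space (std_gauss (UNIV \<times> {..<C})). \<bar>\<Sum>p\<in>UNIV \<times> {..<C}. w p * Z p\<bar> < sqrt \<delta>}"
    by (simp add: std_gauss_mat_def w_def gauss_emb_eq_linear_form[OF c])
  have "measure (std_gauss_mat C) {Z \<in> space (std_gauss_mat C). \<bar>gauss_emb S Z i c\<bar> < sqrt \<delta>}
      \<le> 2 * sqrt \<delta> / \<bar>w (k, c)\<bar>"
    unfolding set_eq unfolding std_gauss_mat_def
    using c Bik \<delta> by (intro measure_std_gauss_linear_small_le) (auto simp: w_def)
  also have "\<dots> \<le> 2 * n * sqrt \<delta> / sqrt T"
    using Bik_le by (simp add: w_def)
  finally show ?thesis
    unfolding n_def by blast
qed

lemma integrable_dirichlet_ratio:
  assumes sym: "\<And>i j. E i j \<longleftrightarrow> E j i"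
  shows "integrable (std_gauss_mat C) (\<lambda>Z. dirichlet E C (gauss_emb S Z) / frob_sq_emb C (gauss_emb S Z))"
proof -
  interpret P: prob_space "std_gauss_mat C"
    unfolding std_gauss_mat_def by (rule prob_space_std_gauss)
  define D where "D Z = dirichlet E C (gauss_emb S Z)" for Z
  define F where "F Z = frob_sq_emb C (gauss_emb S Z)" for Z
  have [measurable]: "D \<in> borel_measurable (std_gauss_mat C)"
    unfolding D_def dirichlet_def gauss_emb_def std_gauss_mat_def by measurable
  have [measurable]: "F \<in> borel_measurable (std_gauss_mat C)"
    unfolding F_def frob_sq_emb_def gauss_emb_def std_gauss_mat_def by measurable
  have "integrable (std_gauss_mat C) (\<lambda>Z. D Z / F Z)"
  proof (rule Bochner_Integration.integrable_bound)
    show "integrable (std_gauss_mat C) (\<lambda>Z. 2::real)"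
      by simp
    have "0 \<le> D Z / F Z" "D Z / F Z \<le> 2" for Z
      unfolding D_def F_def
      by (simp_all add: dirichlet_nonneg[of E, OF sym] frob_sq_emb_nonneg dirichlet_ratio_le_2[of E, OF sym])
    then show "AE Z in std_gauss_mat C. norm (D Z / F Z) \<le> norm (2::real)"
      by (intro AE_I2) (simp del: abs_divide)
  qed measurable
  then show ?thesis
    by (simp add: D_def F_def)
qed

lemma integral_dirichlet_ratio_le:
  fixes S :: "real^'n::finite^'n"
  assumes sym: "\<And>i j. E i j \<longleftrightarrow> E j i"
    and S: "psd S" and T: "0 < T" "T \<le> trace S" and \<delta>: "0 < \<delta>" and C: "1 \<le> C"
  shows "(\<integral>Z. dirichlet E C (gauss_emb S Z) / frob_sq_emb C (gauss_emb S Z) \<partial>std_gauss_mat C)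
    \<le> real C * dirichlet_trace E S / \<delta> + 4 * real CARD('n) * sqrt \<delta> / sqrt T"
proof -
  interpret P: prob_space "std_gauss_mat C"
    unfolding std_gauss_mat_def by (rule prob_space_std_gauss)
  obtain i where i: "measure (std_gauss_mat C) {Z \<in> space (std_gauss_mat C). \<bar>gauss_emb S Z i 0\<bar> < sqrt \<delta>}
      \<le> 2 * real CARD('n) * sqrt \<delta> / sqrt T"
    using ex_gauss_emb_small_prob_le[OF S T \<delta>, of 0 C] C by auto
  define A where "A = {Z \<in> space (std_gauss_mat C). \<bar>gauss_emb S Z i 0\<bar> < sqrt \<delta>}"
  define D where "D Z = dirichlet E C (gauss_emb S Z)" for Z
  define F where "F Z = frob_sq_emb C (gauss_emb S Z)" for Z
  have [measurable]: "A \<in> sets (std_gauss_mat C)"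
    unfolding A_def gauss_emb_def std_gauss_mat_def by measurable
  have int_D: "integrable (std_gauss_mat C) D"
    unfolding D_def by (rule integrable_dirichlet_gauss_emb[OF S])
  have int_ratio: "integrable (std_gauss_mat C) (\<lambda>Z. D Z / F Z)"
    unfolding D_def F_def by (rule integrable_dirichlet_ratio[OF sym])
  have "(\<integral>Z. D Z / F Z \<partial>std_gauss_mat C) \<le> (\<integral>Z. D Z / \<delta> + 2 * indicator A Z \<partial>std_gauss_mat C)"
  proof (rule integral_mono[OF int_ratio])
    show "integrable (std_gauss_mat C) (\<lambda>Z. D Z / \<delta> + 2 * indicator A Z)"
      using int_D by (intro Bochner_Integration.integrable_add integrable_divide integrable_mult_right
          integrable_real_indicator) (simp_all add: P.emeasure_eq_measure)
    fix Z :: "'n \<times> nat \<Rightarrow> real"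
    assume "Z \<in> space (std_gauss_mat C)"
    then show "D Z / F Z \<le> D Z / \<delta> + 2 * indicator A Z"
      using dirichlet_ratio_le[of E 0 C \<delta> "gauss_emb S Z" i, OF sym] C \<delta>
      by (simp add: D_def F_def A_def indicator_def split: if_split_asm)
  qed
  also have "\<dots> = (\<integral>Z. D Z / \<delta> \<partial>std_gauss_mat C) + (\<integral>Z. 2 * indicator A Z \<partial>std_gauss_mat C)"
    using int_D by (intro Bochner_Integration.integral_add integrable_divide integrable_mult_right
        integrable_real_indicator) (simp_all add: P.emeasure_eq_measure)
  also have "\<dots> = real C * dirichlet_trace E S / \<delta> + 2 * measure (std_gauss_mat C) A"
    using integral_dirichlet_gauss_emb[OF S] by (simp add: D_def P.emeasure_eq_measure)
  also have "\<dots> \<le> real C * dirichlet_trace E S / \<delta> + 4 * real CARD('n) * sqrt \<delta> / sqrt T"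
    using i by (simp add: A_def)
  finally show ?thesis
    by (simp add: D_def F_def)
qed

lemma integral_dirichlet_ratio_tendsto_zero:
  fixes S :: "nat \<Rightarrow> real^'n::finite^'n"
  assumes sym: "\<And>i j. E i j \<longleftrightarrow> E j i"
    and S: "\<And>m. psd (S m)" and T: "0 < T" "\<And>m. T \<le> trace (S m)"
    and lim: "(\<lambda>m. dirichlet_trace E (S m)) \<longlonglongrightarrow> 0" and C: "1 \<le> C"
  shows "(\<lambda>m. \<integral>Z. dirichlet E C (gauss_emb (S m) Z) / frob_sq_emb C (gauss_emb (S m) Z) \<partial>std_gauss_mat C)
    \<longlonglongrightarrow> 0"
proof (rule LIMSEQ_I)
  fix r :: real assume r: "0 < r"
  define n where "n = real CARD('n)"
  define \<delta> where "\<delta> = (r * sqrt T / (8 * n))\<^sup>2"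
  have n: "0 < n"
    by (simp add: n_def)
  have \<delta>: "0 < \<delta>"
    using r T n by (simp add: \<delta>_def)
  have "sqrt \<delta> = r * sqrt T / (8 * n)"
    using r T n by (simp add: \<delta>_def)
  then have half: "4 * n * sqrt \<delta> / sqrt T = r / 2"
    using T n by (simp add: field_simps)
  obtain N where N: "\<And>m. N \<le> m \<Longrightarrow> \<bar>dirichlet_trace E (S m)\<bar> < r * \<delta> / (2 * real C)"
    using LIMSEQ_D[OF lim, of "r * \<delta> / (2 * real C)"] r \<delta> C by auto
  show "\<exists>N. \<forall>m\<ge>N. norm ((\<integral>Z. dirichlet E C (gauss_emb (S m) Z) / frob_sq_emb C (gauss_emb (S m) Z)
      \<partial>std_gauss_mat C) - 0) < r"
  proof (intro exI allI impI)
    fix m assume "N \<le> m"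
    then have "dirichlet_trace E (S m) < r * \<delta> / (2 * real C)"
      using N[of m] abs_ge_self[of "dirichlet_trace E (S m)"] by linarith
    then have "real C * dirichlet_trace E (S m) / \<delta> < r / 2"
      using C \<delta> by (simp add: field_simps)
    moreover have "(\<integral>Z. dirichlet E C (gauss_emb (S m) Z) / frob_sq_emb C (gauss_emb (S m) Z) \<partial>std_gauss_mat C)
        \<le> real C * dirichlet_trace E (S m) / \<delta> + 4 * n * sqrt \<delta> / sqrt T"
      using integral_dirichlet_ratio_le[where E=E, OF sym S T(1) T(2) \<delta> C] by (simp add: n_def)
    ultimately have "(\<integral>Z. dirichlet E C (gauss_emb (S m) Z) / frob_sq_emb C (gauss_emb (S m) Z) \<partial>std_gauss_mat C) < r"
      unfolding half by linarith
    moreover have "0 \<le> (\<integral>Z. dirichlet E C (gauss_emb (S m) Z) / frob_sq_emb C (gauss_emb (S m) Z) \<partial>std_gauss_mat C)"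
      by (intro Bochner_Integration.integral_nonneg divide_nonneg_nonneg dirichlet_nonneg[of E, OF sym]
          frob_sq_emb_nonneg)
    ultimately show "norm ((\<integral>Z. dirichlet E C (gauss_emb (S m) Z) / frob_sq_emb C (gauss_emb (S m) Z)
      \<partial>std_gauss_mat C) - 0) < r"
      by simp
  qed
qed

section \<open>The NNGP covariance recursion\<close>

lemma frob_sq_pos: "X \<noteq> 0 \<Longrightarrow> 0 < frob_sq X"
proof -
  assume "X \<noteq> 0"
  then obtain i j where "X$i$j \<noteq> 0"
    by (auto simp: vec_eq_iff)
  then have "0 < (X$i$j)\<^sup>2"
    by simp
  also have "\<dots> \<le> (\<Sum>j\<in>UNIV. (X$i$j)\<^sup>2)"
    by (rule member_le_sum) auto
  also have "\<dots> \<le> frob_sq X"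
    unfolding frob_sq_def by (intro member_le_sum sum_nonneg) auto
  finally show ?thesis .
qed

lemma frob_sq_eq_trace: "frob_sq X = trace (X ** transpose X)"
  by (simp add: frob_sq_def trace_def gram_nth power2_eq_square)

lemma decrements_tendsto_zero:
  fixes t d :: "nat \<Rightarrow> real"
  assumes d: "\<And>m. 0 \<le> d m" and t: "\<And>m. 0 \<le> t m" and step: "\<And>m. t (Suc m) + d m \<le> t m"
  shows "d \<longlonglongrightarrow> 0"
proof -
  have partial: "(\<Sum>m<N. d m) \<le> t 0 - t N" for N
  proof (induction N)
    case (Suc N)
    then show ?case
      using step[of N] by simp
  qed simp
  have "(\<Sum>m<N. d m) \<le> t 0" for N
    using partial[of N] t[of N] by linarith
  then show ?thesis
    by (intro summable_LIMSEQ_zero summableI_nonneg_bounded d)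
qed

context
  fixes E :: "'n::finite \<Rightarrow> 'n \<Rightarrow> bool"
  assumes sym: "\<And>i j. E i j \<longleftrightarrow> E j i"
begin

lemma nngp_cov_1_gram:
  fixes X :: "real^'d::finite^'n"
  shows "nngp_cov relu E X s (Suc 0)
    = (s / real CARD('d)) *\<^sub>R ((norm_adj E ** X) ** transpose (norm_adj E ** X))"
  using sandwich_gram[OF transpose_norm_adj[of E, OF sym], of X] by simp

lemma nngp_cov_Suc_Suc_gram:
  "nngp_cov relu E X s (Suc (Suc m))
    = s *\<^sub>R ((norm_adj E ** cov_factor (gauss_G relu (nngp_cov relu E X s (Suc m))))
        ** transpose (norm_adj E ** cov_factor (gauss_G relu (nngp_cov relu E X s (Suc m)))))"
proof -
  define G where "G = gauss_G relu (nngp_cov relu E X s (Suc m))"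
  define K where "K = cov_factor G"
  have GK: "K ** transpose K = G"
    unfolding K_def G_def by (rule cov_factor_gram[OF psd_gauss_G])
  have "norm_adj E ** G ** norm_adj E = norm_adj E ** K ** transpose K ** norm_adj E"
    unfolding GK[symmetric] by (simp add: matrix_mul_assoc)
  also have "\<dots> = (norm_adj E ** K) ** transpose (norm_adj E ** K)"
    by (rule sandwich_gram[OF transpose_norm_adj[of E, OF sym]])
  finally show ?thesis
    by (simp add: G_def K_def)
qed

lemma psd_nngp_cov: "0 \<le> s \<Longrightarrow> psd (nngp_cov relu E X s (Suc m))"
  by (cases m) (auto simp del: nngp_cov.simps simp: nngp_cov_1_gram nngp_cov_Suc_Suc_gram
      intro!: psd_scaleR psd_gram)

lemma norm_adj_norm_le: "(norm_adj E *v x) \<bullet> (norm_adj E *v x) \<le> x \<bullet> x"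
proof -
  have "0 \<le> adj_gap E * (x \<bullet> (norm_lap E *v x))"
    using adj_gap_pos[of E] lap_form_nonneg[of E x, OF sym] by simp
  then show ?thesis
    using norm_adj_contraction[of E x, OF sym] by linarith
qed

lemma trace_nngp_cov_1_le:
  fixes X :: "real^'d::finite^'n"
  assumes "0 \<le> s"
  shows "trace (nngp_cov relu E X s (Suc 0)) \<le> s / real CARD('d) * frob_sq X"
proof -
  have "trace ((norm_adj E ** X) ** transpose (norm_adj E ** X)) \<le> trace (X ** transpose X)"
    unfolding trace_gram column_matrix_mult by (intro sum_mono norm_adj_norm_le)
  then show ?thesis
    unfolding nngp_cov_1_gram trace_scaleR frob_sq_eq_trace using assms by (intro mult_left_mono) auto
qed

lemma
  assumes s: "0 \<le> s"
  shows trace_nngp_cov_Suc_Suc_le: "trace (nngp_cov relu E X s (Suc (Suc m)))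
      \<le> s * (trace (nngp_cov relu E X s (Suc m)) / 2
           - adj_gap E * dirichlet_trace E (gauss_G relu (nngp_cov relu E X s (Suc m))))"
    and dirichlet_trace_nngp_cov_Suc_Suc_le: "dirichlet_trace E (nngp_cov relu E X s (Suc (Suc m)))
      \<le> s * dirichlet_trace E (gauss_G relu (nngp_cov relu E X s (Suc m)))"
proof -
  define G where "G = gauss_G relu (nngp_cov relu E X s (Suc m))"
  define K where "K = cov_factor G"
  have GK: "K ** transpose K = G"
    unfolding K_def G_def by (rule cov_factor_gram[OF psd_gauss_G])
  have eq: "nngp_cov relu E X s (Suc (Suc m)) = s *\<^sub>R ((norm_adj E ** K) ** transpose (norm_adj E ** K))"
    unfolding K_def G_def by (rule nngp_cov_Suc_Suc_gram)
  have "trace ((norm_adj E ** K) ** transpose (norm_adj E ** K))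
      \<le> (\<Sum>c\<in>UNIV. column c K \<bullet> column c K - adj_gap E * (column c K \<bullet> (norm_lap E *v column c K)))"
    unfolding trace_gram column_matrix_mult by (intro sum_mono norm_adj_contraction[of E, OF sym])
  also have "\<dots> = trace G - adj_gap E * dirichlet_trace E G"
    unfolding GK[symmetric] trace_gram dirichlet_trace_gram by (simp add: sum_subtractf sum_distrib_left)
  also have "trace G = trace (nngp_cov relu E X s (Suc m)) / 2"
    unfolding G_def by (rule trace_gauss_G[OF psd_nngp_cov[OF s]])
  finally show "trace (nngp_cov relu E X s (Suc (Suc m)))
      \<le> s * (trace (nngp_cov relu E X s (Suc m)) / 2 - adj_gap E * dirichlet_trace E (gauss_G relu (nngp_cov relu E X s (Suc m))))"
    unfolding eq trace_scaleR G_def using s by (intro mult_left_mono)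
  have "dirichlet_trace E ((norm_adj E ** K) ** transpose (norm_adj E ** K)) \<le> dirichlet_trace E G"
    unfolding GK[symmetric] dirichlet_trace_gram column_matrix_mult by (intro sum_mono lap_form_norm_adj_le[of E, OF sym])
  then show "dirichlet_trace E (nngp_cov relu E X s (Suc (Suc m)))
      \<le> s * dirichlet_trace E (gauss_G relu (nngp_cov relu E X s (Suc m)))"
    unfolding eq dirichlet_trace_scaleR G_def using s by (intro mult_left_mono)
qed

lemma FSP_eq_trace:
  "0 \<le> s \<Longrightarrow> FSP relu E X C (Suc m) s = real C * trace (nngp_cov relu E X s (Suc m)) / frob_sq X"
  unfolding FSP_def by (simp add: integral_frob_sq_gauss_emb psd_nngp_cov)

lemma FSP_le_power:
  fixes X :: "real^'d::finite^'n"
  assumes s: "0 \<le> s" and X: "X \<noteq> 0" and L: "1 \<le> L"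
  shows "FSP relu E X C L s \<le> 2 * real C / real CARD('d) * (s / 2) ^ L"
proof -
  have trace_le: "trace (nngp_cov relu E X s (Suc m)) \<le> s / real CARD('d) * (s / 2) ^ m * frob_sq X" for m
  proof (induction m)
    case 0
    then show ?case
      using trace_nngp_cov_1_le[OF s] by simp
  next
    case (Suc m)
    have "0 \<le> adj_gap E * dirichlet_trace E (gauss_G relu (nngp_cov relu E X s (Suc m)))"
      using adj_gap_pos[of E] psd_dirichlet_trace_nonneg[of E, OF sym psd_gauss_G] by simp
    then have "trace (nngp_cov relu E X s (Suc (Suc m))) \<le> s * (trace (nngp_cov relu E X s (Suc m)) / 2)"
      using trace_nngp_cov_Suc_Suc_le[OF s, of X m] mult_left_mono[OF _ s, of
          "trace (nngp_cov relu E X s (Suc m)) / 2 - adj_gap E * dirichlet_trace E (gauss_G relu (nngp_cov relu E X s (Suc m)))"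
          "trace (nngp_cov relu E X s (Suc m)) / 2"]
      by linarith
    also have "\<dots> \<le> s * ((s / real CARD('d) * (s / 2) ^ m * frob_sq X) / 2)"
      using Suc.IH s by (intro mult_left_mono) auto
    finally show ?case
      by simp
  qed
  obtain m where m: "L = Suc m"
    using L by (cases L) auto
  have "FSP relu E X C L s \<le> real C * (s / real CARD('d) * (s / 2) ^ m * frob_sq X) / frob_sq X"
    unfolding m FSP_eq_trace[OF s] using trace_le[of m] frob_sq_pos[OF X]
    by (intro divide_right_mono mult_left_mono) auto
  also have "\<dots> = 2 * real C / real CARD('d) * (s / 2) ^ L"
    using frob_sq_pos[OF X] by (simp add: m field_simps)
  finally show ?thesis .
qed

lemma
  shows decseq_trace_nngp_cov_critical: "decseq (\<lambda>m. trace (nngp_cov relu E X 2 (Suc m)))"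
    and dirichlet_trace_nngp_cov_critical_tendsto_zero:
      "(\<lambda>m. dirichlet_trace E (nngp_cov relu E X 2 (Suc (Suc m)))) \<longlonglongrightarrow> 0"
proof -
  define t where "t m = trace (nngp_cov relu E X 2 (Suc m))" for m
  define g where "g m = dirichlet_trace E (gauss_G relu (nngp_cov relu E X 2 (Suc m)))" for m
  have psd: "psd (nngp_cov relu E X 2 (Suc m))" for m
    by (rule psd_nngp_cov) simp
  have t: "0 \<le> t m" for m
    unfolding t_def by (rule psd_trace_nonneg[OF psd])
  have step: "t (Suc m) + 2 * adj_gap E * g m \<le> t m" for m
    using trace_nngp_cov_Suc_Suc_le[of 2 X m] by (simp add: t_def g_def algebra_simps)
  have decrement_nonneg: "0 \<le> 2 * adj_gap E * g m" for m
    using adj_gap_pos[of E] psd_dirichlet_trace_nonneg[of E, OF sym psd_gauss_G] by (simp add: g_def)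
  have "t (Suc m) \<le> t m" for m
    using step[of m] decrement_nonneg[of m] by linarith
  then show "decseq (\<lambda>m. trace (nngp_cov relu E X 2 (Suc m)))"
    unfolding decseq_Suc_iff t_def by blast
  have "(\<lambda>m. 2 * adj_gap E * g m) \<longlonglongrightarrow> 0"
    by (rule decrements_tendsto_zero[where d="\<lambda>m. 2 * adj_gap E * g m", OF decrement_nonneg t step])
  then have "(\<lambda>m. 2 * adj_gap E * g m / adj_gap E) \<longlonglongrightarrow> 0 / adj_gap E"
    by (rule tendsto_divide) (use adj_gap_pos[of E] in auto)
  then have lim_g: "(\<lambda>m. 2 * g m) \<longlonglongrightarrow> 0"
    using adj_gap_pos[of E] by simp
  have "0 \<le> dirichlet_trace E (nngp_cov relu E X 2 (Suc (Suc m)))"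
    and "dirichlet_trace E (nngp_cov relu E X 2 (Suc (Suc m))) \<le> 2 * g m" for m
    using psd_dirichlet_trace_nonneg[of E, OF sym psd[of "Suc m"]] dirichlet_trace_nngp_cov_Suc_Suc_le[of 2 X m]
    by (simp_all add: g_def del: nngp_cov.simps)
  then show "(\<lambda>m. dirichlet_trace E (nngp_cov relu E X 2 (Suc (Suc m)))) \<longlonglongrightarrow> 0"
    by (intro tendsto_sandwich[OF _ _ tendsto_const lim_g]) simp_all
qed

lemma GEV_or_FSP_tendsto_zero_critical:
  fixes X :: "real^'d::finite^'n"
  assumes X: "X \<noteq> 0" and C: "1 \<le> C"
  shows "(\<lambda>L. GEV relu E X C L 2) \<longlonglongrightarrow> 0 \<or> (\<lambda>L. FSP relu E X C L 2) \<longlonglongrightarrow> 0"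
proof -
  define t where "t m = trace (nngp_cov relu E X 2 (Suc m))" for m
  have psd: "psd (nngp_cov relu E X 2 (Suc m))" for m
    by (rule psd_nngp_cov) simp
  have t: "0 \<le> t m" for m
    unfolding t_def by (rule psd_trace_nonneg[OF psd])
  obtain T where T: "t \<longlonglongrightarrow> T" "\<And>m. T \<le> t m"
    using decseq_convergent[OF decseq_trace_nngp_cov_critical, of 0 X] t unfolding t_def by blast
  show ?thesis
  proof (cases "T = 0")
    case True
    have "(\<lambda>m. real C * t m / frob_sq X) \<longlonglongrightarrow> real C * T / frob_sq X"
      using frob_sq_pos[OF X] by (intro tendsto_intros T(1)) simp
    then have "(\<lambda>m. FSP relu E X C (Suc m) 2) \<longlonglongrightarrow> 0"
      using True by (simp add: FSP_eq_trace t_def)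
    then have "(\<lambda>L. FSP relu E X C L 2) \<longlonglongrightarrow> 0"
      by (rule filterlim_sequentially_Suc[THEN iffD1])
    then show ?thesis ..
  next
    case False
    then have "0 < T"
      using LIMSEQ_le_const[OF T(1)] t by force
    moreover have "T \<le> trace (nngp_cov relu E X 2 (Suc (Suc m)))" for m
      using T(2)[of "Suc m"] by (simp add: t_def)
    ultimately have "(\<lambda>m. GEV relu E X C (Suc (Suc m)) 2) \<longlonglongrightarrow> 0"
      unfolding GEV_def
      by (rule integral_dirichlet_ratio_tendsto_zero[where E=E, OF sym psd _ _
            dirichlet_trace_nngp_cov_critical_tendsto_zero C])
    then have "(\<lambda>m. GEV relu E X C (Suc m) 2) \<longlonglongrightarrow> 0"
      by (rule filterlim_sequentially_Suc[THEN iffD1])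
    then have "(\<lambda>L. GEV relu E X C L 2) \<longlonglongrightarrow> 0"
      by (rule filterlim_sequentially_Suc[THEN iffD1])
    then show ?thesis ..
  qed
qed

end

theorem theorem1:
  fixes E :: "'n::finite \<Rightarrow> 'n \<Rightarrow> bool"
    and X :: "real^'d::finite^'n"
    and C :: nat and s :: real
  assumes sym: "\<And>i j. E i j \<longleftrightarrow> E j i"
    and irrefl: "\<And>i. \<not> E i i"
    and X_nz: "X \<noteq> 0"
    and C_pos: "C \<ge> 1"
  shows "(s = 2 \<longrightarrow>
            ((\<lambda>L. GEV relu E X C L s) \<longlonglongrightarrow> 0) \<or> ((\<lambda>L. FSP relu E X C L s) \<longlonglongrightarrow> 0))
       \<and> (0 < s \<and> s < 2 \<longrightarrow>
            (\<forall>L\<ge>1. FSP relu E X C L s \<le> 2 * real C / real CARD('d) * (s / 2) ^ L))"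
  \<comment> \<open>\<open>irrefl\<close> is unused: every lemma above also holds for graphs with self-loops.\<close>
  using GEV_or_FSP_tendsto_zero_critical[OF sym X_nz C_pos] FSP_le_power[OF sym _ X_nz] by auto

end
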